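(* Let $X,E,F$ be Banach spaces, $B\subset X$ an open ball, $\xi\in\partial B$, and $P:B\to\mathrm{Hom}(E,F)$ a holomorphic function. If for every $e\in E$ the function $Pe:B\to F$ analytically continues across $\xi$ (i.e. to a holomorphic function on $B\cup W$ for some neighborhood $W$ of $\xi$), then $P$ itself analytically continues across $\xi$.
   Context: $\mathrm{Hom}(E,F)$ is the Banach space of bounded linear operators $E\to F$ with the operator norm. *)

theory Defs
  imports "HOL-Analysis.Analysis"
begin

text \<open>The Isabelle/HOL distribution has no class of complex vector spaces, so we
introduce complex Banach spaces as real Banach spaces equipped with a complex scalar
multiplication that extends the real one and is compatible with the norm.\<close>

class complex_banach = banach +
  fixes scaleC :: "complex \<Rightarrow> 'a \<Rightarrow> 'a" (infixr \<open>*\<^sub>C\<close> 75)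
  assumes scaleC_add_right: "c *\<^sub>C (x + y) = c *\<^sub>C x + c *\<^sub>C y"
    and scaleC_add_left: "(a + b) *\<^sub>C x = a *\<^sub>C x + b *\<^sub>C x"
    and scaleC_scaleC: "a *\<^sub>C (b *\<^sub>C x) = (a * b) *\<^sub>C x"
    and scaleC_of_real: "complex_of_real r *\<^sub>C x = r *\<^sub>R x"
    and norm_scaleC: "norm (c *\<^sub>C x) = cmod c * norm x"

lemma bounded_linear_scaleC_comp:
  fixes T :: "'a::real_normed_vector \<Rightarrow> 'b::complex_banach"
  assumes "bounded_linear T"
  shows "bounded_linear (\<lambda>e. c *\<^sub>C T e)"
proof -
  interpret T: bounded_linear T by fact
  obtain K where K: "\<And>x. norm (T x) \<le> norm x * K" using T.bounded by blast
  show ?thesis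
  proof (unfold_locales)
    fix x y show "c *\<^sub>C T (x + y) = c *\<^sub>C T x + c *\<^sub>C T y"
      by (simp add: T.add scaleC_add_right)
  next
    fix r x
    have "c *\<^sub>C T (r *\<^sub>R x) = c *\<^sub>C (complex_of_real r *\<^sub>C T x)"
      by (simp add: T.scale scaleC_of_real)
    also have "\<dots> = complex_of_real r *\<^sub>C (c *\<^sub>C T x)"
      by (simp add: scaleC_scaleC mult.commute)
    finally show "c *\<^sub>C T (r *\<^sub>R x) = r *\<^sub>R (c *\<^sub>C T x)"
      by (simp add: scaleC_of_real)
  next
    show "\<exists>K. \<forall>x. norm (c *\<^sub>C T x) \<le> norm x * K"
    proof (intro exI allI)
      fix x
      have "norm (c *\<^sub>C T x) = cmod c * norm (T x)" by (simp add: norm_scaleC)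
      also have "\<dots> \<le> cmod c * (norm x * K)" using K by (simp add: mult_left_mono)
      finally show "norm (c *\<^sub>C T x) \<le> norm x * (cmod c * K)" by (simp add: ac_simps)
    qed
  qed
qed

text \<open>The space Hom(E,F) of bounded
complex-linear operators is the (closed, complex) subspace of those operators commuting
with complex scaling (see is_hom below).\<close>

instantiation blinfun :: (real_normed_vector, complex_banach) complex_banach
begin

definition scaleC_blinfun :: "complex \<Rightarrow> ('a \<Rightarrow>\<^sub>L 'b) \<Rightarrow> ('a \<Rightarrow>\<^sub>L 'b)" where
  "scaleC_blinfun c T = Blinfun (\<lambda>e. c *\<^sub>C blinfun_apply T e)"

lemma blinfun_apply_scaleC: "blinfun_apply (c *\<^sub>C T) e = c *\<^sub>C blinfun_apply T e"
  unfolding scaleC_blinfun_def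
  by (simp add: bounded_linear_Blinfun_apply bounded_linear_scaleC_comp blinfun.bounded_linear_right)

instance
proof
  fix c a b :: complex and x y :: "'a \<Rightarrow>\<^sub>L 'b" and r :: real
  show "c *\<^sub>C (x + y) = c *\<^sub>C x + c *\<^sub>C y"
    by (rule blinfun_eqI) (simp add: blinfun_apply_scaleC blinfun.add_left scaleC_add_right)
  show "(a + b) *\<^sub>C x = a *\<^sub>C x + b *\<^sub>C x"
    by (rule blinfun_eqI) (simp add: blinfun_apply_scaleC blinfun.add_left scaleC_add_left)
  show "a *\<^sub>C (b *\<^sub>C x) = (a * b) *\<^sub>C x"
    by (rule blinfun_eqI) (simp add: blinfun_apply_scaleC scaleC_scaleC)
  show "complex_of_real r *\<^sub>C x = r *\<^sub>R x"
    by (rule blinfun_eqI) (simp add: blinfun_apply_scaleC scaleC_of_real blinfun.scaleR_left)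
  show "norm (c *\<^sub>C x) = cmod c * norm x"
  proof (rule antisym)
    show "norm (c *\<^sub>C x) \<le> cmod c * norm x"
      by (rule norm_blinfun_bound)
         (auto simp: blinfun_apply_scaleC norm_scaleC mult.assoc intro!: mult_left_mono norm_blinfun)
  next
    show "cmod c * norm x \<le> norm (c *\<^sub>C x)"
    proof (cases "c = 0")
      case True then show ?thesis by simp
    next
      case False
      have "x = inverse c *\<^sub>C (c *\<^sub>C x)"
        by (rule blinfun_eqI) (simp add: blinfun_apply_scaleC scaleC_scaleC False
              scaleC_of_real[of 1, simplified])
      have "norm x \<le> cmod (inverse c) * norm (c *\<^sub>C x)"
      proof (rule norm_blinfun_bound)
        fix e
        have "norm (blinfun_apply x e) = cmod (inverse c) * norm (blinfun_apply (c *\<^sub>C x) e)"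
          by (subst \<open>x = _\<close>) (simp add: blinfun_apply_scaleC norm_scaleC)
        also have "\<dots> \<le> cmod (inverse c) * (norm (c *\<^sub>C x) * norm e)"
          by (intro mult_left_mono norm_blinfun) simp
        finally show "norm (blinfun_apply x e) \<le> cmod (inverse c) * norm (c *\<^sub>C x) * norm e"
          by (simp add: mult.assoc)
      qed simp
      hence "norm x \<le> inverse (cmod c) * norm (c *\<^sub>C x)" by (simp add: norm_inverse)
      thus ?thesis using False by (simp add: field_simps)
    qed
  qed
qed

end

definition complex_linear :: "('a::complex_banach \<Rightarrow> 'b::complex_banach) \<Rightarrow> bool" where
  "complex_linear D \<longleftrightarrow> (\<forall>c h. D (c *\<^sub>C h) = c *\<^sub>C D h)"

definition banach_holomorphic_on ::
    "('a::complex_banach \<Rightarrow> 'b::complex_banach) \<Rightarrow> 'a set \<Rightarrow> bool" where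
  "banach_holomorphic_on f S \<longleftrightarrow>
     (\<forall>z\<in>S. \<exists>D. (f has_derivative D) (at z) \<and> complex_linear D)"

definition is_hom :: "('e::complex_banach \<Rightarrow>\<^sub>L 'f::complex_banach) \<Rightarrow> bool" where
  "is_hom T \<longleftrightarrow> complex_linear (blinfun_apply T)"

end

theory Submission
  imports Defs "HOL-Complex_Analysis.Complex_Analysis"
begin

text \<open>For each radius \<rho> = r/(n+1) and bound n+1 consider the vectors e whose map P e
continues holomorphically to ball c r \<union> ball \<xi> \<rho> with bound n+1 on ball \<xi> \<rho>.  These
countably many sets cover E, so by Baire one of their closures contains a ball; a
Vitali-type argument shows the closure is contained in the set for radius \<rho>/3, and
translating and rescaling the ball gives continuations bounded by K norm e for every e.
Near \<xi> these continuations are unique, hence linear in e, and they assemble into a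
locally bounded operator-valued map all of whose applications are holomorphic, which is
therefore holomorphic.  Estimates for Banach-valued holomorphic maps are reduced to
Cauchy estimates on complex lines via Hahn--Banach.\<close>

section \<open>Norming functionals\<close>

text \<open>Partial linear functionals are represented by their graphs, so that Zorn's lemma
can be applied to sets ordered by inclusion.\<close>

definition norm_dominated_graph :: "'a::real_normed_vector \<Rightarrow> ('a \<times> real) set \<Rightarrow> bool" where
  "norm_dominated_graph y G \<longleftrightarrow>
     (\<forall>x a b. (x, a) \<in> G \<longrightarrow> (x, b) \<in> G \<longrightarrow> a = b) \<and>
     (\<forall>x a x' a'. (x, a) \<in> G \<longrightarrow> (x', a') \<in> G \<longrightarrow> (x + x', a + a') \<in> G) \<and>
     (\<forall>x a t. (x, a) \<in> G \<longrightarrow> (t *\<^sub>R x, t * a) \<in> G) \<and>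
     (\<forall>x a. (x, a) \<in> G \<longrightarrow> a \<le> norm x) \<and>
     (y, norm y) \<in> G"

lemma norm_dominated_graphD:
  assumes "norm_dominated_graph y G"
  shows norm_dominated_graph_unique: "(x, a) \<in> G \<Longrightarrow> (x, b) \<in> G \<Longrightarrow> a = b"
    and norm_dominated_graph_add: "(x, a) \<in> G \<Longrightarrow> (x', a') \<in> G \<Longrightarrow> (x + x', a + a') \<in> G"
    and norm_dominated_graph_scaleR: "(x, a) \<in> G \<Longrightarrow> (t *\<^sub>R x, t * a) \<in> G"
    and norm_dominated_graph_le: "(x, a) \<in> G \<Longrightarrow> a \<le> norm x"
    and norm_dominated_graph_base: "(y, norm y) \<in> G"
  using assms unfolding norm_dominated_graph_def by blast+

lemma norm_dominated_graph_line: "norm_dominated_graph y {(t *\<^sub>R y, t * norm y) | t. True}"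
  unfolding norm_dominated_graph_def
proof (intro conjI allI impI)
  fix x a b
  assume "(x, a) \<in> {(t *\<^sub>R y, t * norm y) | t. True}" "(x, b) \<in> {(t *\<^sub>R y, t * norm y) | t. True}"
  then obtain t t' where "x = t *\<^sub>R y" "a = t * norm y" "x = t' *\<^sub>R y" "b = t' * norm y"
    by blast
  then show "a = b"
    by (cases "y = 0") (auto simp: scaleR_cancel_right)
next
  fix x a x' a'
  assume "(x, a) \<in> {(t *\<^sub>R y, t * norm y) | t. True}" "(x', a') \<in> {(t *\<^sub>R y, t * norm y) | t. True}"
  then obtain t t' where "x = t *\<^sub>R y" "a = t * norm y" "x' = t' *\<^sub>R y" "a' = t' * norm y"
    by blast
  then show "(x + x', a + a') \<in> {(t *\<^sub>R y, t * norm y) | t. True}"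
    by (auto intro!: exI[of _ "t + t'"] simp: scaleR_add_left distrib_right)
next
  fix x a s
  assume "(x, a) \<in> {(t *\<^sub>R y, t * norm y) | t. True}"
  then obtain t where "x = t *\<^sub>R y" "a = t * norm y"
    by blast
  then show "(s *\<^sub>R x, s * a) \<in> {(t *\<^sub>R y, t * norm y) | t. True}"
    by (auto intro!: exI[of _ "s * t"])
next
  fix x a
  assume "(x, a) \<in> {(t *\<^sub>R y, t * norm y) | t. True}"
  then show "a \<le> norm x"
    by (auto simp: mult_right_mono)
qed (auto intro!: exI[of _ 1])

lemma norm_dominated_graph_Union_chain:
  assumes "C \<noteq> {}" "\<And>G. G \<in> C \<Longrightarrow> norm_dominated_graph y G"
    and chain: "\<And>G H. G \<in> C \<Longrightarrow> H \<in> C \<Longrightarrow> G \<subseteq> H \<or> H \<subseteq> G"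
  shows "norm_dominated_graph y (\<Union>C)"
  unfolding norm_dominated_graph_def
proof (intro conjI allI impI)
  fix x a b
  assume "(x, a) \<in> \<Union>C" "(x, b) \<in> \<Union>C"
  then obtain G where "G \<in> C" "(x, a) \<in> G" "(x, b) \<in> G"
    using chain by blast
  then show "a = b"
    using assms(2) norm_dominated_graph_unique by blast
next
  fix x a x' a'
  assume "(x, a) \<in> \<Union>C" "(x', a') \<in> \<Union>C"
  then obtain G where "G \<in> C" "(x, a) \<in> G" "(x', a') \<in> G"
    using chain by blast
  then show "(x + x', a + a') \<in> \<Union>C"
    using assms(2) norm_dominated_graph_add by blast
next
  fix x a s
  assume "(x, a) \<in> \<Union>C"
  then show "(s *\<^sub>R x, s * a) \<in> \<Union>C"
    using assms(2) norm_dominated_graph_scaleR by blast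
next
  fix x a
  assume "(x, a) \<in> \<Union>C"
  then show "a \<le> norm x"
    using assms(2) norm_dominated_graph_le by blast
next
  show "(y, norm y) \<in> \<Union>C"
    using assms(1,2) norm_dominated_graph_base by blast
qed

text \<open>The one-dimensional Hahn--Banach step: a value c at the new direction x0 can be
chosen between the supremum of the lower bounds and the infimum of the upper bounds
that domination imposes.\<close>

lemma norm_dominated_graph_gap:
  assumes M: "norm_dominated_graph y M"
  obtains c where "\<And>x a. (x, a) \<in> M \<Longrightarrow> a - norm (x - x0) \<le> c"
    "\<And>x a. (x, a) \<in> M \<Longrightarrow> c \<le> norm (x + x0) - a"
proof
  have zero: "(0, 0) \<in> M"
    using norm_dominated_graph_scaleR[OF M norm_dominated_graph_base[OF M], of 0] by simp
  define L where "L = {a - norm (x - x0) | x a. (x, a) \<in> M}"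
  have lower_le_upper: "a - norm (x - x0) \<le> norm (x' + x0) - a'"
    if "(x, a) \<in> M" "(x', a') \<in> M" for x a x' a'
  proof -
    have "a + a' \<le> norm ((x - x0) + (x' + x0))"
      using norm_dominated_graph_le[OF M norm_dominated_graph_add[OF M that]] by simp
    also have "\<dots> \<le> norm (x - x0) + norm (x' + x0)"
      by (rule norm_triangle_ineq)
    finally show ?thesis
      by simp
  qed
  have "bdd_above L"
    unfolding L_def bdd_above_def using lower_le_upper[OF _ zero] by auto
  then show "a - norm (x - x0) \<le> Sup L" if "(x, a) \<in> M" for x a
    by (rule cSup_upper[rotated]) (use that in \<open>auto simp: L_def\<close>)
  show "Sup L \<le> norm (x' + x0) - a'" if "(x', a') \<in> M" for x' a'
    using zero lower_le_upper[OF _ that] by (intro cSup_least) (auto simp: L_def)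
qed

lemma norm_dominated_graph_decomp_unique:
  assumes M: "norm_dominated_graph y M" and x0: "\<And>a. (x0, a) \<notin> M"
    and "(x, a) \<in> M" "(x', a') \<in> M" "x + t *\<^sub>R x0 = x' + t' *\<^sub>R x0"
  shows "t = t' \<and> x = x'"
proof (cases "t = t'")
  case False
  have "(t' - t) *\<^sub>R x0 = x - x'"
    using assms(5) by (simp add: algebra_simps)
  then have "(1 / (t' - t)) *\<^sub>R ((t' - t) *\<^sub>R x0) = (1 / (t' - t)) *\<^sub>R (x - x')"
    by simp
  then have x0_eq: "x0 = (1 / (t' - t)) *\<^sub>R (x + (-1) *\<^sub>R x')"
    using False by simp
  note scaleR = norm_dominated_graph_scaleR[OF M] and add = norm_dominated_graph_add[OF M]
  have "(x0, (1 / (t' - t)) * (a + (-1) * a')) \<in> M"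
    unfolding x0_eq by (rule scaleR[OF add[OF assms(3) scaleR[OF assms(4)]]])
  then show ?thesis
    using x0 by blast
qed (use assms(5) in simp)

lemma norm_dominated_graph_extension_le:
  assumes M: "norm_dominated_graph y M" and "(x, a) \<in> M"
    and c_ge: "\<And>x a. (x, a) \<in> M \<Longrightarrow> a - norm (x - x0) \<le> c"
    and c_le: "\<And>x a. (x, a) \<in> M \<Longrightarrow> c \<le> norm (x + x0) - a"
  shows "a + t * c \<le> norm (x + t *\<^sub>R x0)"
proof -
  note scaleR = norm_dominated_graph_scaleR[OF M assms(2)]
  consider "t = 0" | "t > 0" | "t < 0"
    by linarith
  then show ?thesis
  proof cases
    case 1
    then show ?thesis
      using norm_dominated_graph_le[OF M assms(2)] by simp
  next
    case 2
    have "c \<le> norm ((1 / t) *\<^sub>R x + x0) - (1 / t) * a"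
      using c_le[OF scaleR] .
    also have "(1 / t) *\<^sub>R x + x0 = (1 / t) *\<^sub>R (x + t *\<^sub>R x0)"
      using 2 by (simp add: algebra_simps)
    finally have "c \<le> norm (x + t *\<^sub>R x0) / t - a / t"
      using 2 by simp
    then show ?thesis
      using 2 by (simp add: field_simps)
  next
    case 3
    have "(1 / - t) * a - norm ((1 / - t) *\<^sub>R x - x0) \<le> c"
      using c_ge[OF scaleR] .
    also have "(1 / - t) *\<^sub>R x - x0 = (1 / - t) *\<^sub>R (x + t *\<^sub>R x0)"
      using 3 by (simp add: algebra_simps)
    finally have "a / - t - norm (x + t *\<^sub>R x0) / - t \<le> c"
      using 3 by simp
    then show ?thesis
      using 3 by (simp add: field_simps)
  qed
qed

lemma norm_dominated_graph_extend:
  assumes M: "norm_dominated_graph y M" and x0: "\<And>a. (x0, a) \<notin> M"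
  obtains M' where "norm_dominated_graph y M'" "M \<subset> M'"
proof -
  obtain c where c_ge: "\<And>x a. (x, a) \<in> M \<Longrightarrow> a - norm (x - x0) \<le> c"
    and c_le: "\<And>x a. (x, a) \<in> M \<Longrightarrow> c \<le> norm (x + x0) - a"
    using norm_dominated_graph_gap[OF M] by blast
  define M' where "M' = {(x + t *\<^sub>R x0, a + t * c) | x a t. (x, a) \<in> M}"
  note add = norm_dominated_graph_add[OF M] and scaleR = norm_dominated_graph_scaleR[OF M]
  have "norm_dominated_graph y M'"
    unfolding norm_dominated_graph_def
  proof (intro conjI allI impI)
    fix z a b
    assume "(z, a) \<in> M'" "(z, b) \<in> M'"
    then obtain x1 a1 t1 x2 a2 t2 where h: "(x1, a1) \<in> M" "(x2, a2) \<in> M"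
      "z = x1 + t1 *\<^sub>R x0" "a = a1 + t1 * c" "z = x2 + t2 *\<^sub>R x0" "b = a2 + t2 * c"
      unfolding M'_def by blast
    then have "t1 = t2 \<and> x1 = x2"
      using norm_dominated_graph_decomp_unique[OF M x0 h(1,2)] by metis
    then show "a = b"
      using h norm_dominated_graph_unique[OF M] by auto
  next
    fix z a z' a'
    assume "(z, a) \<in> M'" "(z', a') \<in> M'"
    then obtain x1 a1 t1 x2 a2 t2 where h: "(x1, a1) \<in> M" "(x2, a2) \<in> M"
      "z = x1 + t1 *\<^sub>R x0" "a = a1 + t1 * c" "z' = x2 + t2 *\<^sub>R x0" "a' = a2 + t2 * c"
      unfolding M'_def by blast
    have "z + z' = (x1 + x2) + (t1 + t2) *\<^sub>R x0" "a + a' = (a1 + a2) + (t1 + t2) * c"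
      using h by (auto simp: algebra_simps)
    then show "(z + z', a + a') \<in> M'"
      unfolding M'_def using add[OF h(1,2)] by blast
  next
    fix z a s
    assume "(z, a) \<in> M'"
    then obtain x1 a1 t1 where h: "(x1, a1) \<in> M" "z = x1 + t1 *\<^sub>R x0" "a = a1 + t1 * c"
      unfolding M'_def by blast
    have "s *\<^sub>R z = s *\<^sub>R x1 + (s * t1) *\<^sub>R x0" "s * a = s * a1 + (s * t1) * c"
      using h by (auto simp: algebra_simps)
    then show "(s *\<^sub>R z, s * a) \<in> M'"
      unfolding M'_def using scaleR[OF h(1)] by blast
  next
    fix z a
    assume "(z, a) \<in> M'"
    then obtain x1 a1 t1 where h: "(x1, a1) \<in> M" "z = x1 + t1 *\<^sub>R x0" "a = a1 + t1 * c"
      unfolding M'_def by blast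
    then show "a \<le> norm z"
      using norm_dominated_graph_extension_le[OF M h(1) c_ge c_le] by simp
  next
    show "(y, norm y) \<in> M'"
      unfolding M'_def using norm_dominated_graph_base[OF M] by force
  qed
  moreover have "M \<subseteq> M'"
    unfolding M'_def by force
  moreover have "(0, 0) \<in> M"
    using scaleR[OF norm_dominated_graph_base[OF M], of 0] by simp
  then have "(x0, c) \<in> M'"
    unfolding M'_def by force
  ultimately show ?thesis
    using that x0 by blast
qed

lemma maximal_norm_dominated_graph:
  fixes y :: "'a::real_normed_vector"
  obtains M where "norm_dominated_graph y M" "\<And>x. \<exists>a. (x, a) \<in> M"
proof -
  define A where "A = {G. norm_dominated_graph y G}"
  have "\<forall>C\<in>chains A. \<exists>U\<in>A. \<forall>X\<in>C. X \<subseteq> U"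
  proof
    fix C
    assume C: "C \<in> chains A"
    show "\<exists>U\<in>A. \<forall>X\<in>C. X \<subseteq> U"
    proof (cases "C = {}")
      case True
      then show ?thesis
        using norm_dominated_graph_line unfolding A_def by blast
    next
      case False
      have "norm_dominated_graph y (\<Union>C)"
        by (rule norm_dominated_graph_Union_chain[OF False])
          (use C in \<open>auto simp: chains_def chain_subset_def A_def\<close>)
      then show ?thesis
        unfolding A_def by blast
    qed
  qed
  from Zorn_Lemma2[OF this] obtain M where "M \<in> A" and max: "\<forall>X\<in>A. M \<subseteq> X \<longrightarrow> X = M"
    by blast
  then have M: "norm_dominated_graph y M"
    by (simp add: A_def)
  have total: "\<exists>a. (x, a) \<in> M" for x
  proof (rule ccontr)
    assume "\<nexists>a. (x, a) \<in> M"
    then obtain M' where "norm_dominated_graph y M'" "M \<subset> M'"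
      using norm_dominated_graph_extend[OF M] by blast
    then show False
      using max unfolding A_def by blast
  qed
  show ?thesis
    by (rule that[OF M total])
qed

theorem norming_functional_exists:
  fixes y :: "'a::real_normed_vector"
  obtains l where "bounded_linear l" "\<And>x. \<bar>l x\<bar> \<le> norm x" "l y = norm y"
proof -
  obtain M where M: "norm_dominated_graph y M" and total: "\<And>x. \<exists>a. (x, a) \<in> M"
    using maximal_norm_dominated_graph[of y] by blast
  define l where "l x = (THE a. (x, a) \<in> M)" for x
  have graph: "(x, l x) \<in> M" for x
    unfolding l_def using total[of x] norm_dominated_graph_unique[OF M] by (metis theI)
  have l_eq: "l x = a" if "(x, a) \<in> M" for x a
    using norm_dominated_graph_unique[OF M graph that] .
  have l_add: "l (x + x') = l x + l x'" for x x'
    by (rule l_eq[OF norm_dominated_graph_add[OF M graph graph]])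
  have l_scaleR: "l (t *\<^sub>R x) = t * l x" for t x
    by (rule l_eq[OF norm_dominated_graph_scaleR[OF M graph]])
  have l_bound: "\<bar>l x\<bar> \<le> norm x" for x
    using norm_dominated_graph_le[OF M graph, of x] norm_dominated_graph_le[OF M graph, of "- x"]
      l_scaleR[of "-1" x] by simp
  show ?thesis
  proof
    show "bounded_linear l"
      by (rule bounded_linear_intro[of _ 1]) (auto simp: l_add l_scaleR l_bound)
  qed (use l_bound l_eq[OF norm_dominated_graph_base[OF M]] in auto)
qed

lemma scaleC_one [simp]: "(1::complex) *\<^sub>C x = x"
  using scaleC_of_real[of 1 x] by simp

lemma scaleC_zero_left [simp]: "(0::complex) *\<^sub>C x = 0"
  using scaleC_of_real[of 0 x] by simp

lemma scaleC_zero_right [simp]: "c *\<^sub>C (0::'a::complex_banach) = 0"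
  using scaleC_add_right[of c 0 0] by simp

lemma scaleC_diff_right: "c *\<^sub>C (x - y) = c *\<^sub>C x - c *\<^sub>C (y::'a::complex_banach)"
  using scaleC_add_right[of c "x - y" y] by (simp add: algebra_simps)

lemma scaleC_scaleR_commute: "c *\<^sub>C (t *\<^sub>R (y::'a::complex_banach)) = t *\<^sub>R (c *\<^sub>C y)"
  by (simp add: scaleC_scaleC mult.commute flip: scaleC_of_real)

lemma scaleC_Re_Im: "a *\<^sub>C y = Re a *\<^sub>R y + Im a *\<^sub>R (\<i> *\<^sub>C (y::'a::complex_banach))"
proof -
  have "a = complex_of_real (Re a) + complex_of_real (Im a) * \<i>"
    by (simp add: complex_eq_iff)
  then have "a *\<^sub>C y = complex_of_real (Re a) *\<^sub>C y + (complex_of_real (Im a) * \<i>) *\<^sub>C y"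
    by (metis scaleC_add_left)
  also have "\<dots> = Re a *\<^sub>R y + Im a *\<^sub>R (\<i> *\<^sub>C y)"
    by (simp add: scaleC_of_real flip: scaleC_scaleC)
  finally show ?thesis .
qed

lemma bounded_linear_scaleC_left: "bounded_linear (\<lambda>h::complex. h *\<^sub>C (w::'a::complex_banach))"
proof (rule bounded_linear_intro[of _ "norm w"])
  fix r :: real and x :: complex
  show "(r *\<^sub>R x) *\<^sub>C w = r *\<^sub>R (x *\<^sub>C w)"
    by (simp add: scaleR_conv_of_real scaleC_of_real flip: scaleC_scaleC)
qed (simp_all add: scaleC_add_left norm_scaleC)

lemma bounded_linear_scaleC_right: "bounded_linear (\<lambda>x::'a::complex_banach. c *\<^sub>C x)"
  by (rule bounded_linear_intro[of _ "cmod c"])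
    (simp_all add: scaleC_add_right scaleC_scaleR_commute norm_scaleC)

definition complexify :: "('a::complex_banach \<Rightarrow> real) \<Rightarrow> 'a \<Rightarrow> complex" where
  "complexify l y = Complex (l y) (- l (\<i> *\<^sub>C y))"

lemma bounded_linear_complexify:
  assumes "bounded_linear l"
  shows "bounded_linear (complexify l)"
proof -
  interpret l: bounded_linear l by fact
  obtain K where K: "\<And>x. norm (l x) \<le> norm x * K"
    using l.bounded by blast
  interpret i: bounded_linear "\<lambda>x::'a. \<i> *\<^sub>C x"
    by (rule bounded_linear_scaleC_right)
  show ?thesis
  proof (rule bounded_linear_intro[of _ "2 * K"])
    fix x
    have "cmod (complexify l x) \<le> \<bar>l x\<bar> + \<bar>l (\<i> *\<^sub>C x)\<bar>"
      using cmod_le[of "complexify l x"] by (simp add: complexify_def)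
    also have "\<dots> \<le> norm x * K + norm (\<i> *\<^sub>C x) * K"
      using K by (intro add_mono) auto
    finally show "norm (complexify l x) \<le> norm x * (2 * K)"
      by (simp add: norm_scaleC algebra_simps)
  qed (simp_all add: complexify_def l.add i.add l.scale i.scale complex_eq_iff)
qed

lemma complexify_scaleC:
  assumes "bounded_linear l"
  shows "complexify l (a *\<^sub>C y) = a * complexify l y"
proof -
  interpret l: bounded_linear l by fact
  have i_a: "\<i> *\<^sub>C (a *\<^sub>C y) = (- Im a) *\<^sub>R y + Re a *\<^sub>R (\<i> *\<^sub>C y)"
    by (simp add: scaleC_scaleC scaleC_Re_Im[of "\<i> * a" y])
  show ?thesis
    unfolding complexify_def i_a unfolding scaleC_Re_Im[of a y] l.add l.scale
    by (simp add: complex_eq_iff algebra_simps)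
qed

lemma norm_complexify_le:
  assumes "\<And>x. \<bar>l x\<bar> \<le> norm x"
  shows "cmod (complexify l y) \<le> 2 * norm y"
proof -
  have "cmod (complexify l y) \<le> \<bar>l y\<bar> + \<bar>l (\<i> *\<^sub>C y)\<bar>"
    using cmod_le[of "complexify l y"] by (simp add: complexify_def)
  also have "\<dots> \<le> norm y + norm (\<i> *\<^sub>C y)"
    using assms by (intro add_mono)
  finally show ?thesis
    by (simp add: norm_scaleC)
qed

lemma norm_le_if_complexified_functionals_le:
  fixes y :: "'a::complex_banach"
  assumes "\<And>l. bounded_linear l \<Longrightarrow> (\<And>x. \<bar>l x\<bar> \<le> norm x) \<Longrightarrow> cmod (complexify l y) \<le> B"
  shows "norm y \<le> B"
proof -
  obtain l where l: "bounded_linear l" "\<And>x. \<bar>l x\<bar> \<le> norm x" "l y = norm y"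
    using norming_functional_exists[of y] by blast
  have "norm y = Re (complexify l y)"
    using l(3) by (simp add: complexify_def)
  also have "\<dots> \<le> cmod (complexify l y)"
    by (rule complex_Re_le_cmod)
  also have "\<dots> \<le> B"
    using assms l by blast
  finally show ?thesis .
qed

lemma banach_holomorphic_on_subset:
  "banach_holomorphic_on g S \<Longrightarrow> T \<subseteq> S \<Longrightarrow> banach_holomorphic_on g T"
  by (auto simp: banach_holomorphic_on_def)

lemma banach_holomorphic_on_Un:
  "banach_holomorphic_on g S \<Longrightarrow> banach_holomorphic_on g T \<Longrightarrow> banach_holomorphic_on g (S \<union> T)"
  by (auto simp: banach_holomorphic_on_def)

lemma banach_holomorphic_on_imp_isCont:
  "banach_holomorphic_on g S \<Longrightarrow> z \<in> S \<Longrightarrow> isCont g z"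
  unfolding banach_holomorphic_on_def using has_derivative_continuous by blast

lemma banach_holomorphic_on_zero: "banach_holomorphic_on (\<lambda>x. 0) S"
  unfolding banach_holomorphic_on_def complex_linear_def
  by (auto intro!: exI[of _ "\<lambda>h. 0"])

lemma banach_holomorphic_on_add:
  assumes "banach_holomorphic_on f S" "banach_holomorphic_on g S"
  shows "banach_holomorphic_on (\<lambda>x. f x + g x) S"
  unfolding banach_holomorphic_on_def
proof
  fix z
  assume "z \<in> S"
  then obtain Df Dg where "(f has_derivative Df) (at z)" "complex_linear Df"
    "(g has_derivative Dg) (at z)" "complex_linear Dg"
    using assms unfolding banach_holomorphic_on_def by blast
  then show "\<exists>D. ((\<lambda>x. f x + g x) has_derivative D) (at z) \<and> complex_linear D"
    by (intro exI[of _ "\<lambda>h. Df h + Dg h"] conjI has_derivative_add)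
      (auto simp: complex_linear_def scaleC_add_right)
qed

lemma banach_holomorphic_on_diff:
  assumes "banach_holomorphic_on f S" "banach_holomorphic_on g S"
  shows "banach_holomorphic_on (\<lambda>x. f x - g x) S"
  unfolding banach_holomorphic_on_def
proof
  fix z
  assume "z \<in> S"
  then obtain Df Dg where "(f has_derivative Df) (at z)" "complex_linear Df"
    "(g has_derivative Dg) (at z)" "complex_linear Dg"
    using assms unfolding banach_holomorphic_on_def by blast
  then show "\<exists>D. ((\<lambda>x. f x - g x) has_derivative D) (at z) \<and> complex_linear D"
    by (intro exI[of _ "\<lambda>h. Df h - Dg h"] conjI has_derivative_diff)
      (auto simp: complex_linear_def scaleC_diff_right)
qed

lemma banach_holomorphic_on_scaleR:
  assumes "banach_holomorphic_on f S"
  shows "banach_holomorphic_on (\<lambda>x. t *\<^sub>R f x) S"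
  unfolding banach_holomorphic_on_def
proof
  fix z
  assume "z \<in> S"
  then obtain D where "(f has_derivative D) (at z)" "complex_linear D"
    using assms unfolding banach_holomorphic_on_def by blast
  then show "\<exists>D. ((\<lambda>x. t *\<^sub>R f x) has_derivative D) (at z) \<and> complex_linear D"
    by (intro exI[of _ "\<lambda>h. t *\<^sub>R D h"] conjI has_derivative_scaleR_right)
      (auto simp: complex_linear_def scaleC_scaleR_commute)
qed

lemma banach_holomorphic_on_scaleC:
  assumes "banach_holomorphic_on f S"
  shows "banach_holomorphic_on (\<lambda>x. a *\<^sub>C f x) S"
  unfolding banach_holomorphic_on_def
proof
  fix z
  assume "z \<in> S"
  then obtain D where "(f has_derivative D) (at z)" "complex_linear D"
    using assms unfolding banach_holomorphic_on_def by blast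
  then show "\<exists>D. ((\<lambda>x. a *\<^sub>C f x) has_derivative D) (at z) \<and> complex_linear D"
    by (intro exI[of _ "\<lambda>h. a *\<^sub>C D h"] conjI
        bounded_linear.has_derivative[OF bounded_linear_scaleC_right])
      (auto simp: complex_linear_def scaleC_scaleC mult.commute)
qed

lemma banach_holomorphic_on_cong:
  assumes "open S" "banach_holomorphic_on g S" "\<And>x. x \<in> S \<Longrightarrow> f x = g x"
  shows "banach_holomorphic_on f S"
  unfolding banach_holomorphic_on_def
proof
  fix z
  assume z: "z \<in> S"
  then obtain D where "(g has_derivative D) (at z)" "complex_linear D"
    using assms unfolding banach_holomorphic_on_def by blast
  moreover from this(1) have "(f has_derivative D) (at z)"
    by (rule has_derivative_transform_within_open[OF _ assms(1) z]) (use assms(3) in auto)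
  ultimately show "\<exists>D. (f has_derivative D) (at z) \<and> complex_linear D"
    by blast
qed

lemma banach_holomorphic_on_blinfun_apply:
  fixes P :: "'x::complex_banach \<Rightarrow> ('e::real_normed_vector \<Rightarrow>\<^sub>L 'f::complex_banach)"
  assumes "banach_holomorphic_on P S"
  shows "banach_holomorphic_on (\<lambda>z. blinfun_apply (P z) e) S"
  unfolding banach_holomorphic_on_def
proof
  fix z
  assume "z \<in> S"
  then obtain D where D: "(P has_derivative D) (at z)" "complex_linear D"
    using assms unfolding banach_holomorphic_on_def by blast
  have "((\<lambda>z. blinfun_apply (P z) e) has_derivative (\<lambda>h. blinfun_apply (D h) e)) (at z)"
    by (rule bounded_linear.has_derivative[OF blinfun.bounded_linear_left D(1)])
  moreover have "complex_linear (\<lambda>h. blinfun_apply (D h) e)"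
    using D(2) by (simp add: complex_linear_def blinfun_apply_scaleC)
  ultimately show "\<exists>D. ((\<lambda>z. blinfun_apply (P z) e) has_derivative D) (at z) \<and> complex_linear D"
    by blast
qed

lemma has_field_derivative_complexify_line:
  fixes g :: "'x::complex_banach \<Rightarrow> 'f::complex_banach"
  assumes l: "bounded_linear l" and g: "(g has_derivative D) (at (a + u0 *\<^sub>C w))"
    and D: "complex_linear D"
  shows "((\<lambda>u. complexify l (g (a + u *\<^sub>C w))) has_field_derivative complexify l (D w)) (at u0)"
proof -
  have "((\<lambda>u::complex. a + u *\<^sub>C w) has_derivative (\<lambda>h. h *\<^sub>C w)) (at u0)"
    using has_derivative_add[OF has_derivative_const[of a]
        bounded_linear.has_derivative[OF bounded_linear_scaleC_left has_derivative_ident]]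
    by simp
  from diff_chain_at[OF this g]
  have "((\<lambda>u. g (a + u *\<^sub>C w)) has_derivative (\<lambda>h. D (h *\<^sub>C w))) (at u0)"
    by (simp add: o_def)
  then have "((\<lambda>u. complexify l (g (a + u *\<^sub>C w))) has_derivative (\<lambda>h. complexify l (D (h *\<^sub>C w)))) (at u0)"
    by (rule bounded_linear.has_derivative[OF bounded_linear_complexify[OF l]])
  moreover have "(\<lambda>h. complexify l (D (h *\<^sub>C w))) = (*) (complexify l (D w))"
    using D by (auto simp: complex_linear_def complexify_scaleC[OF l] mult.commute)
  ultimately show ?thesis
    by (simp add: has_field_derivative_def)
qed

lemma holomorphic_on_complexify_line:
  fixes g :: "'x::complex_banach \<Rightarrow> 'f::complex_banach"
  assumes g: "banach_holomorphic_on g S" and l: "bounded_linear l"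
    and line: "\<And>u. u \<in> T \<Longrightarrow> a + u *\<^sub>C w \<in> S"
  shows "(\<lambda>u. complexify l (g (a + u *\<^sub>C w))) holomorphic_on T"
  unfolding holomorphic_on_def
proof
  fix u0
  assume "u0 \<in> T"
  then obtain D where "(g has_derivative D) (at (a + u0 *\<^sub>C w))" "complex_linear D"
    using g line unfolding banach_holomorphic_on_def by blast
  from has_field_derivative_complexify_line[OF l this]
  show "(\<lambda>u. complexify l (g (a + u *\<^sub>C w))) field_differentiable at u0 within T"
    using field_differentiable_at_within field_differentiable_def by blast
qed

section \<open>Cauchy estimates\<close>

lemma norm_Taylor_coeff_le:
  fixes \<psi> :: "complex \<Rightarrow> complex"
  assumes holo: "\<psi> holomorphic_on ball 0 R" and r: "0 < r" "r < R"
    and bd: "\<And>u. u \<in> ball 0 R \<Longrightarrow> cmod (\<psi> u) \<le> A"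
  shows "cmod ((deriv ^^ n) \<psi> 0 / fact n) \<le> A / r ^ n"
proof -
  have "cmod ((deriv ^^ n) \<psi> 0) \<le> fact n * A / r ^ n"
  proof (rule Cauchy_inequality)
    show "\<psi> holomorphic_on ball 0 r"
      by (rule holomorphic_on_subset[OF holo]) (use r in auto)
    show "continuous_on (cball 0 r) \<psi>"
      by (rule continuous_on_subset[OF holomorphic_on_imp_continuous_on[OF holo]]) (use r in auto)
  qed (use r bd in auto)
  then show ?thesis
    by (simp add: norm_divide pos_divide_le_eq mult.commute)
qed

lemma norm_deriv_0_le:
  fixes \<psi> :: "complex \<Rightarrow> complex"
  assumes "\<psi> holomorphic_on ball 0 1" "\<And>u. u \<in> ball 0 1 \<Longrightarrow> cmod (\<psi> u) \<le> A"
  shows "cmod (deriv \<psi> 0) \<le> 2 * A"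
  using norm_Taylor_coeff_le[OF assms(1) _ _ assms(2), of "1/2" 1] by simp

lemma norm_first_order_remainder_le:
  fixes \<psi> :: "complex \<Rightarrow> complex"
  assumes holo: "\<psi> holomorphic_on ball 0 1" and bd: "\<And>u. u \<in> ball 0 1 \<Longrightarrow> cmod (\<psi> u) \<le> A"
    and u: "cmod u \<le> 1/4"
  shows "cmod (\<psi> u - \<psi> 0 - u * deriv \<psi> 0) \<le> 8 * A * (cmod u)\<^sup>2"
proof -
  define c where "c n = (deriv ^^ n) \<psi> 0 / fact n" for n
  have A: "0 \<le> A"
    using order_trans[OF norm_ge_zero bd[of 0]] by simp
  have S: "(\<lambda>n. c n * u ^ n) sums \<psi> u"
    using holomorphic_power_series[OF holo, of u] u by (simp add: c_def)
  have "(\<lambda>i. c (i + 2) * u ^ (i + 2)) sums (\<psi> u - (\<Sum>i<2. c i * u ^ i))"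
    using sums_iff_shift[of "\<lambda>n. c n * u ^ n" 2 "\<psi> u - (\<Sum>i<2. c i * u ^ i)"] S by simp
  moreover have "(\<Sum>i<2. c i * u ^ i) = \<psi> 0 + u * deriv \<psi> 0"
    by (simp add: c_def numeral_2_eq_2)
  ultimately have tail: "(\<lambda>i. c (i + 2) * u ^ (i + 2)) sums (\<psi> u - \<psi> 0 - u * deriv \<psi> 0)"
    by (simp add: algebra_simps)
  define q where "q = 2 * cmod u"
  have q: "0 \<le> q" "q \<le> 1/2"
    using u by (auto simp: q_def)
  have G: "(\<lambda>i. (4 * A * (cmod u)\<^sup>2) * q ^ i) sums ((4 * A * (cmod u)\<^sup>2) * (1 / (1 - q)))"
    by (rule sums_mult[OF geometric_sums]) (use q in auto)
  have "cmod (\<psi> u - \<psi> 0 - u * deriv \<psi> 0) \<le> (4 * A * (cmod u)\<^sup>2) * (1 / (1 - q))"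
  proof (rule norm_sums_le[OF tail G])
    fix i
    have "cmod (c (i + 2)) \<le> A / (1/2) ^ (i + 2)"
      unfolding c_def by (rule norm_Taylor_coeff_le[OF holo _ _ bd]) auto
    then have "cmod (c (i + 2)) \<le> A * 2 ^ (i + 2)"
      by (simp add: power_one_over)
    then have "cmod (c (i + 2) * u ^ (i + 2)) \<le> A * 2 ^ (i + 2) * cmod u ^ (i + 2)"
      by (simp add: norm_mult norm_power mult_right_mono)
    also have "\<dots> = (4 * A * (cmod u)\<^sup>2) * q ^ i"
      by (simp add: q_def power_add power_mult_distrib power2_eq_square)
    finally show "norm (c (i + 2) * u ^ (i + 2)) \<le> (4 * A * (cmod u)\<^sup>2) * q ^ i" .
  qed
  also have "\<dots> \<le> (4 * A * (cmod u)\<^sup>2) * 2"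
    using q A by (intro mult_left_mono) (auto simp: field_simps)
  finally show ?thesis
    by simp
qed

text \<open>Split the Taylor series at K: the head is controlled by the small-disc bound E,
the tail by the large-disc bound A.\<close>

lemma norm_le_two_constants:
  fixes \<psi> :: "complex \<Rightarrow> complex"
  assumes holo: "\<psi> holomorphic_on ball 0 (5/3)"
    and bdA: "\<And>u. u \<in> ball 0 (5/3) \<Longrightarrow> cmod (\<psi> u) \<le> A"
    and s: "0 < s" "s \<le> 1"
    and bdE: "\<And>u. u \<in> ball 0 s \<Longrightarrow> cmod (\<psi> u) \<le> E"
  shows "cmod (\<psi> 1) \<le> E * K * (2 / s) ^ K + 3 * A * (2/3) ^ K"
proof -
  define c where "c n = (deriv ^^ n) \<psi> 0 / fact n" for n
  have E: "0 \<le> E"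
    using order_trans[OF norm_ge_zero bdE[of 0]] s by simp
  have cA: "cmod (c n) \<le> A * (2/3) ^ n" for n
    using norm_Taylor_coeff_le[OF holo _ _ bdA, of "3/2" n]
    by (simp add: c_def power_one_over field_simps)
  have holo_s: "\<psi> holomorphic_on ball 0 s"
    by (rule holomorphic_on_subset[OF holo]) (use s in auto)
  have cE: "cmod (c n) \<le> E * (2 / s) ^ n" for n
    using norm_Taylor_coeff_le[OF holo_s _ _ bdE, of "s/2" n] s
    by (simp add: c_def power_divide field_simps)
  have S: "c sums \<psi> 1"
    using holomorphic_power_series[OF holo, of 1] by (simp add: c_def[abs_def])
  have T: "(\<lambda>i. c (i + K)) sums (\<psi> 1 - (\<Sum>i<K. c i))"
    using sums_iff_shift[of c K "\<psi> 1 - (\<Sum>i<K. c i)"] S by simp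
  have G: "(\<lambda>i. (A * (2/3) ^ K) * (2/3) ^ i) sums ((A * (2/3) ^ K) * (1 / (1 - 2/3)))"
    by (rule sums_mult[OF geometric_sums]) auto
  have tail: "cmod (\<psi> 1 - (\<Sum>i<K. c i)) \<le> (A * (2/3) ^ K) * (1 / (1 - 2/3))"
  proof (rule norm_sums_le[OF T G])
    show "norm (c (i + K)) \<le> (A * (2/3) ^ K) * (2/3) ^ i" for i
      using cA[of "i + K"] by (simp add: power_add mult_ac)
  qed
  have "cmod (\<Sum>i<K. c i) \<le> (\<Sum>i<K. cmod (c i))"
    by (rule norm_sum)
  also have "\<dots> \<le> (\<Sum>i<K. E * (2 / s) ^ K)"
  proof (rule sum_mono)
    fix i
    assume "i \<in> {..<K}"
    then have "(2 / s) ^ i \<le> (2 / s) ^ K"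
      using s by (intro power_increasing) auto
    then show "cmod (c i) \<le> E * (2 / s) ^ K"
      using cE[of i] E by (meson mult_left_mono order_trans)
  qed
  finally have head: "cmod (\<Sum>i<K. c i) \<le> E * K * (2 / s) ^ K"
    by (simp add: mult_ac)
  have "cmod (\<psi> 1) \<le> cmod (\<Sum>i<K. c i) + cmod (\<psi> 1 - (\<Sum>i<K. c i))"
    by (metis add.commute diff_add_cancel norm_triangle_ineq)
  also have "\<dots> \<le> E * K * (2 / s) ^ K + 3 * A * (2/3) ^ K"
    using head tail by simp
  finally show ?thesis .
qed

section \<open>Estimates for Banach-valued holomorphic maps\<close>

lemma add_scaleC_in_ball:
  fixes w :: "'a::complex_banach"
  assumes u: "u \<in> ball 0 k" and w: "k * norm w \<le> R" and R: "0 < R"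
  shows "b + u *\<^sub>C w \<in> ball b R"
proof -
  have "norm (u *\<^sub>C w) < R"
  proof (cases "w = 0")
    case False
    then have "cmod u * norm w < k * norm w"
      using u by (intro mult_strict_right_mono) auto
    then show ?thesis
      using w by (simp add: norm_scaleC)
  qed (use R in simp)
  then show ?thesis
    by (simp add: dist_norm)
qed

lemma complexify_line_holomorphic_bounded:
  fixes g :: "'x::complex_banach \<Rightarrow> 'f::complex_banach"
  assumes g: "banach_holomorphic_on g (ball z R)" and R: "0 < R"
    and bd: "\<And>x. x \<in> ball z R \<Longrightarrow> norm (g x) \<le> A"
    and w: "norm w \<le> R" and l: "bounded_linear l" "\<And>x. \<bar>l x\<bar> \<le> norm x"
  shows "(\<lambda>u. complexify l (g (z + u *\<^sub>C w))) holomorphic_on ball 0 1"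
    and "\<And>u. u \<in> ball 0 1 \<Longrightarrow> cmod (complexify l (g (z + u *\<^sub>C w))) \<le> 2 * A"
proof -
  have line: "z + u *\<^sub>C w \<in> ball z R" if "u \<in> ball 0 1" for u
    using add_scaleC_in_ball[OF that _ R] w by simp
  show "(\<lambda>u. complexify l (g (z + u *\<^sub>C w))) holomorphic_on ball 0 1"
    by (rule holomorphic_on_complexify_line[OF g l(1) line])
  show "cmod (complexify l (g (z + u *\<^sub>C w))) \<le> 2 * A" if "u \<in> ball 0 1" for u
    using norm_complexify_le[OF l(2), of "g (z + u *\<^sub>C w)"] bd[OF line[OF that]] by linarith
qed

lemma norm_derivative_le:
  fixes g :: "'x::complex_banach \<Rightarrow> 'f::complex_banach"
  assumes g: "banach_holomorphic_on g (ball z R)" and R: "0 < R"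
    and bd: "\<And>x. x \<in> ball z R \<Longrightarrow> norm (g x) \<le> A"
    and D: "(g has_derivative D) (at z)" "complex_linear D"
  shows "norm (D h) \<le> 4 * A * norm h / R"
proof (cases "h = 0")
  case True
  then show ?thesis
    using has_derivative_bounded_linear[OF D(1)] by (simp add: linear_simps)
next
  case False
  interpret D: bounded_linear D
    using has_derivative_bounded_linear[OF D(1)] .
  define w where "w = (R / norm h) *\<^sub>R h"
  have w: "norm w = R"
    using False R by (simp add: w_def)
  have "norm (D w) \<le> 4 * A"
  proof (rule norm_le_if_complexified_functionals_le)
    fix l :: "'f \<Rightarrow> real"
    assume l: "bounded_linear l" "\<And>x. \<bar>l x\<bar> \<le> norm x"
    note line = complexify_line_holomorphic_bounded[OF g R bd _ l, of w]
    have "deriv (\<lambda>u. complexify l (g (z + u *\<^sub>C w))) 0 = complexify l (D w)"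
      using has_field_derivative_complexify_line[OF l(1) _ D(2), of g z 0 w] D(1)
      by (simp add: DERIV_imp_deriv)
    then show "cmod (complexify l (D w)) \<le> 4 * A"
      using norm_deriv_0_le[OF line] w by simp
  qed
  moreover have "D h = (norm h / R) *\<^sub>R D w"
    using False R by (simp add: w_def flip: D.scale)
  then have "norm (D h) = norm h / R * norm (D w)"
    using R by simp
  ultimately show ?thesis
    using R mult_left_mono[of "norm (D w)" "4 * A" "norm h / R"] by (simp add: field_simps)
qed

lemma norm_derivative_remainder_le:
  fixes g :: "'x::complex_banach \<Rightarrow> 'f::complex_banach"
  assumes g: "banach_holomorphic_on g (ball z R)" and R: "0 < R"
    and bd: "\<And>x. x \<in> ball z R \<Longrightarrow> norm (g x) \<le> A"
    and D: "(g has_derivative D) (at z)" "complex_linear D"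
    and h: "norm h \<le> R / 4"
  shows "norm (g (z + h) - g z - D h) \<le> 16 * A * (norm h)\<^sup>2 / R\<^sup>2"
proof (cases "h = 0")
  case True
  then show ?thesis
    using has_derivative_bounded_linear[OF D(1)] by (simp add: linear_simps)
next
  case False
  define w where "w = (R / norm h) *\<^sub>R h"
  define u0 where "u0 = complex_of_real (norm h / R)"
  have w: "norm w = R"
    using False R by (simp add: w_def)
  have "u0 *\<^sub>C w = (norm h / R) *\<^sub>R w"
    unfolding u0_def by (rule scaleC_of_real)
  then have u0_w: "u0 *\<^sub>C w = h"
    using False R by (simp add: w_def)
  have u0: "cmod u0 = norm h / R"
    unfolding u0_def norm_of_real using R by simp
  show ?thesis
  proof (rule norm_le_if_complexified_functionals_le)
    fix l :: "'f \<Rightarrow> real"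
    assume l: "bounded_linear l" "\<And>x. \<bar>l x\<bar> \<le> norm x"
    interpret L: bounded_linear "complexify l"
      using bounded_linear_complexify[OF l(1)] .
    define \<psi> where "\<psi> u = complexify l (g (z + u *\<^sub>C w))" for u
    note line = complexify_line_holomorphic_bounded[OF g R bd _ l, of w, folded \<psi>_def]
    have "deriv \<psi> 0 = complexify l (D w)"
      unfolding \<psi>_def using has_field_derivative_complexify_line[OF l(1) _ D(2), of g z 0 w] D(1)
      by (simp add: DERIV_imp_deriv)
    then have "u0 * deriv \<psi> 0 = complexify l (D h)"
      using D(2) u0_w by (simp add: complexify_scaleC[OF l(1)] complex_linear_def flip: u0_w)
    then have "\<psi> u0 - \<psi> 0 - u0 * deriv \<psi> 0 = complexify l (g (z + h) - g z - D h)"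
      by (simp add: \<psi>_def u0_w L.diff)
    moreover have "cmod u0 \<le> 1/4"
      using h R by (simp add: u0 divide_le_eq)
    ultimately show "cmod (complexify l (g (z + h) - g z - D h)) \<le> 16 * A * (norm h)\<^sup>2 / R\<^sup>2"
      using norm_first_order_remainder_le[OF line, of u0] w u0 by (simp add: power_divide)
  qed
qed

lemma norm_le_two_constants_banach:
  fixes g :: "'x::complex_banach \<Rightarrow> 'f::complex_banach"
  assumes g: "banach_holomorphic_on g (ball b R)"
    and bdA: "\<And>x. x \<in> ball b R \<Longrightarrow> norm (g x) \<le> A"
    and d: "0 < d" "d \<le> 3 * R / 5"
    and bdE: "\<And>x. x \<in> ball b d \<Longrightarrow> norm (g x) \<le> E"
    and w: "norm w < 3 * R / 5"
  shows "norm (g (b + w)) \<le> 2 * E * K * (6 * R / (5 * d)) ^ K + 6 * A * (2/3) ^ K"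
proof (rule norm_le_if_complexified_functionals_le)
  fix l :: "'f \<Rightarrow> real"
  assume l: "bounded_linear l" "\<And>x. \<bar>l x\<bar> \<le> norm x"
  define s where "s = 5 * d / (3 * R)"
  have R: "0 < R"
    using d by simp
  have s: "0 < s" "s \<le> 1" "2 / s = 6 * R / (5 * d)"
    using d R by (auto simp: s_def field_simps)
  define \<psi> where "\<psi> u = complexify l (g (b + u *\<^sub>C w))" for u
  have "5/3 * norm w \<le> R"
    using w by simp
  then have in_R: "b + u *\<^sub>C w \<in> ball b R" if "u \<in> ball 0 (5/3)" for u
    using add_scaleC_in_ball[OF that _ R] by blast
  have "s * norm w \<le> s * (3 * R / 5)"
    using w s by (intro mult_left_mono) auto
  then have in_d: "b + u *\<^sub>C w \<in> ball b d" if "u \<in> ball 0 s" for u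
    using add_scaleC_in_ball[OF that _ d(1)] R by (simp add: s_def)
  have "cmod (\<psi> 1) \<le> (2 * E) * K * (2 / s) ^ K + 3 * (2 * A) * (2/3) ^ K"
  proof (rule norm_le_two_constants[OF _ _ s(1,2)])
    show "\<psi> holomorphic_on ball 0 (5/3)"
      unfolding \<psi>_def by (rule holomorphic_on_complexify_line[OF g l(1) in_R])
    show "cmod (\<psi> u) \<le> 2 * A" if "u \<in> ball 0 (5/3)" for u
      using norm_complexify_le[OF l(2), of "g (b + u *\<^sub>C w)"] bdA[OF in_R[OF that]]
      unfolding \<psi>_def by linarith
    show "cmod (\<psi> u) \<le> 2 * E" if "u \<in> ball 0 s" for u
      using norm_complexify_le[OF l(2), of "g (b + u *\<^sub>C w)"] bdE[OF in_d[OF that]]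
      unfolding \<psi>_def by linarith
  qed
  then show "cmod (complexify l (g (b + w))) \<le> 2 * E * K * (6 * R / (5 * d)) ^ K + 6 * A * (2/3) ^ K"
    by (simp add: \<psi>_def s(3))
qed

text \<open>Vitali-type propagation: the two-constants estimate, applied to differences f m - f n,
carries uniform Cauchyness from a small ball to 3/5 of the large one.\<close>

lemma Cauchy_if_uniformly_Cauchy_near_centre:
  fixes f :: "nat \<Rightarrow> 'x::complex_banach \<Rightarrow> 'f::complex_banach"
  assumes hol: "\<And>j. banach_holomorphic_on (f j) (ball b R)"
    and bd: "\<And>j x. x \<in> ball b R \<Longrightarrow> norm (f j x) \<le> A"
    and d: "0 < d" and unif: "uniformly_Cauchy_on (ball b d) f"
    and w: "norm w < 3 * R / 5"
  shows "Cauchy (\<lambda>j. f j (b + w))"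
proof (rule CauchyI)
  fix \<eta> :: real
  assume \<eta>: "0 < \<eta>"
  have R: "0 < R"
    using w norm_ge_zero[of w] by linarith
  define d' where "d' = min d (3 * R / 5)"
  have d': "0 < d'" "d' \<le> 3 * R / 5"
    using d R by (auto simp: d'_def)
  have A: "0 \<le> A"
    using order_trans[OF norm_ge_zero bd[of b 0]] R by simp
  obtain K where K: "(2/3::real) ^ K < \<eta> / (2 * (12 * A + 1))"
    using real_arch_pow_inv[of "\<eta> / (2 * (12 * A + 1))" "2/3"] \<eta> A by auto
  define C where "C = 2 * K * (6 * R / (5 * d')) ^ K"
  have C: "0 \<le> C"
    using d' by (simp add: C_def)
  define \<epsilon> where "\<epsilon> = \<eta> / (2 * (C + 1))"
  have \<epsilon>: "0 < \<epsilon>" "C * \<epsilon> \<le> \<eta> / 2"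
    using \<eta> C by (auto simp: \<epsilon>_def field_simps)
  obtain N where N: "\<And>x m n. x \<in> ball b d \<Longrightarrow> N \<le> m \<Longrightarrow> N \<le> n \<Longrightarrow> dist (f m x) (f n x) < \<epsilon>"
    using unif \<epsilon>(1) unfolding uniformly_Cauchy_on_def by meson
  show "\<exists>M. \<forall>m\<ge>M. \<forall>n\<ge>M. norm (f m (b + w) - f n (b + w)) < \<eta>"
  proof (intro exI allI impI)
    fix m n
    assume mn: "N \<le> m" "N \<le> n"
    have "norm (f m (b + w) - f n (b + w)) \<le> 2 * \<epsilon> * K * (6 * R / (5 * d')) ^ K + 6 * (2 * A) * (2/3) ^ K"
    proof (rule norm_le_two_constants_banach[OF _ _ d' _ w])
      show "banach_holomorphic_on (\<lambda>x. f m x - f n x) (ball b R)"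
        by (rule banach_holomorphic_on_diff[OF hol hol])
      show "norm (f m x - f n x) \<le> 2 * A" if "x \<in> ball b R" for x
        using norm_triangle_ineq4[of "f m x" "f n x"] bd[OF that, of m] bd[OF that, of n] by simp
      show "norm (f m x - f n x) \<le> \<epsilon>" if "x \<in> ball b d'" for x
        using N[of x m n] that mn by (simp add: d'_def dist_norm)
    qed
    also have "\<dots> = C * \<epsilon> + 12 * A * (2/3) ^ K"
      by (simp add: C_def)
    also have "\<dots> < \<eta> / 2 + \<eta> / 2"
    proof (rule add_le_less_mono[OF \<epsilon>(2)])
      have "12 * A * (2/3) ^ K \<le> (12 * A + 1) * (2/3::real) ^ K"
        by simp
      also have "\<dots> < (12 * A + 1) * (\<eta> / (2 * (12 * A + 1)))"
        using K A by (intro mult_strict_left_mono) auto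
      also have "\<dots> = \<eta> / 2"
        using A by (simp add: field_simps)
      finally show "12 * A * (2/3) ^ K < \<eta> / 2" .
    qed
    finally show "norm (f m (b + w) - f n (b + w)) < \<eta>"
      by simp
  qed
qed

lemma banach_holomorphic_vanishes_on_line:
  fixes g :: "'x::complex_banach \<Rightarrow> 'f::complex_banach"
  assumes g: "banach_holomorphic_on g S" and R: "1 < R" and s: "0 < s" "s \<le> R"
    and line: "\<And>u. u \<in> ball 0 R \<Longrightarrow> b + u *\<^sub>C w \<in> S"
    and zero: "\<And>u. u \<in> ball 0 s \<Longrightarrow> g (b + u *\<^sub>C w) = 0"
  shows "g (b + w) = 0"
proof -
  have "norm (g (b + w)) \<le> 0"
  proof (rule norm_le_if_complexified_functionals_le)
    fix l :: "'f \<Rightarrow> real"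
    assume l: "bounded_linear l"
    interpret L: bounded_linear "complexify l"
      by (rule bounded_linear_complexify[OF l])
    have "(\<lambda>u. complexify l (g (b + u *\<^sub>C w))) 1 = (\<lambda>u. 0) 1"
    proof (rule analytic_continuation_open[of "ball 0 s" "ball 0 R"
          "\<lambda>u. complexify l (g (b + u *\<^sub>C w))" "\<lambda>u. 0"])
      show "(\<lambda>u. complexify l (g (b + u *\<^sub>C w))) holomorphic_on ball 0 R"
        by (rule holomorphic_on_complexify_line[OF g l line])
    qed (use R s in \<open>auto simp: zero L.zero subset_ball\<close>)
    then show "cmod (complexify l (g (b + w))) \<le> 0"
      by simp
  qed
  then show ?thesis
    by simp
qed

section \<open>Limits of holomorphic maps\<close>

lemma isCont_norm_le_on_ball:
  assumes "isCont f b"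
  obtains d where "0 < d" "\<And>x. x \<in> ball b d \<Longrightarrow> norm (f x) \<le> norm (f b) + 1"
proof -
  obtain d where d: "0 < d" "\<And>x. dist x b < d \<Longrightarrow> dist (f x) (f b) < 1"
    using assms unfolding continuous_at_eps_delta by (meson zero_less_one)
  have "norm (f x) \<le> norm (f b) + 1" if "x \<in> ball b d" for x
  proof -
    have "dist x b < d"
      using that by (simp add: dist_commute)
    then show ?thesis
      using d(2)[of x] norm_triangle_ineq2[of "f x" "f b"] by (simp add: dist_norm)
  qed
  with d(1) show ?thesis
    using that by blast
qed

lemma uniformly_Cauchy_on_blinfun_apply:
  assumes es: "Cauchy es" and bd: "\<And>x. x \<in> S \<Longrightarrow> norm (P x) \<le> B"
  shows "uniformly_Cauchy_on S (\<lambda>j x. blinfun_apply (P x) (es j))"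
proof (rule uniformly_Cauchy_onI)
  fix \<epsilon> :: real
  assume \<epsilon>: "0 < \<epsilon>"
  then obtain N where N: "\<And>m n. N \<le> m \<Longrightarrow> N \<le> n \<Longrightarrow> norm (es m - es n) < \<epsilon> / (\<bar>B\<bar> + 1)"
    using CauchyD[OF es, of "\<epsilon> / (\<bar>B\<bar> + 1)"] by (auto simp: add_nonneg_pos)
  have "dist (P x (es m)) (P x (es n)) < \<epsilon>" if "x \<in> S" "N \<le> m" "N \<le> n" for x m n
  proof -
    have "dist (P x (es m)) (P x (es n)) \<le> norm (P x) * norm (es m - es n)"
      unfolding dist_norm blinfun.diff_right[symmetric] by (rule norm_blinfun)
    also have "\<dots> \<le> (\<bar>B\<bar> + 1) * norm (es m - es n)"
      using bd[OF that(1)] by (intro mult_right_mono) auto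
    also have "\<dots> < (\<bar>B\<bar> + 1) * (\<epsilon> / (\<bar>B\<bar> + 1))"
      using N[OF that(2,3)] by (intro mult_strict_left_mono) auto
    finally show ?thesis
      by (simp add: add_nonneg_pos)
  qed
  then show "\<exists>N. \<forall>x\<in>S. \<forall>m\<ge>N. \<forall>n\<ge>N. dist (P x (es m)) (P x (es n)) < \<epsilon>"
    by blast
qed

lemma has_derivative_if_quadratic_remainder:
  assumes D: "bounded_linear D" and R: "0 < R" and C: "0 \<le> C"
    and rem: "\<And>h. norm h < R \<Longrightarrow> norm (F (z + h) - F z - D h) \<le> C * (norm h)\<^sup>2"
  shows "(F has_derivative D) (at z)"
  unfolding has_derivative_at_alt
proof (intro conjI allI impI D)
  fix e :: real
  assume e: "0 < e"
  show "\<exists>d>0. \<forall>y. norm (y - z) < d \<longrightarrow> norm (F y - F z - D (y - z)) \<le> e * norm (y - z)"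
  proof (intro exI conjI allI impI)
    show "0 < min R (e / (C + 1))"
      using R e C by simp
    fix y
    assume y: "norm (y - z) < min R (e / (C + 1))"
    have "norm (F y - F z - D (y - z)) \<le> C * (norm (y - z))\<^sup>2"
      using rem[of "y - z"] y by simp
    also have "\<dots> = (C * norm (y - z)) * norm (y - z)"
      by (simp add: power2_eq_square)
    also have "\<dots> \<le> e * norm (y - z)"
    proof (rule mult_right_mono)
      have "C * norm (y - z) \<le> C * (e / (C + 1))"
        using y C by (intro mult_left_mono) auto
      also have "\<dots> \<le> e"
        using C e by (simp add: field_simps)
      finally show "C * norm (y - z) \<le> e" .
    qed simp
    finally show "norm (F y - F z - D (y - z)) \<le> e * norm (y - z)" .
  qed
qed

lemma Cauchy_if_uniformly_approximable:
  fixes X :: "nat \<Rightarrow> 'a::real_normed_vector"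
  assumes "\<And>\<eta>. \<eta> > 0 \<Longrightarrow> \<exists>Y. Cauchy Y \<and> (\<forall>j. norm (X j - Y j) \<le> \<eta>)"
  shows "Cauchy X"
proof (rule CauchyI)
  fix e :: real
  assume e: "0 < e"
  obtain Y where Y: "Cauchy Y" "\<And>j. norm (X j - Y j) \<le> e / 3"
    using assms[of "e / 3"] e by auto
  obtain M where M: "\<And>m n. M \<le> m \<Longrightarrow> M \<le> n \<Longrightarrow> norm (Y m - Y n) < e / 3"
    using CauchyD[OF Y(1), of "e / 3"] e by auto
  show "\<exists>M. \<forall>m\<ge>M. \<forall>n\<ge>M. norm (X m - X n) < e"
  proof (intro exI allI impI)
    fix m n
    assume "M \<le> m" "M \<le> n"
    have "norm (X m - X n) = norm ((X m - Y m) + (Y m - Y n) - (X n - Y n))"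
      by (simp add: algebra_simps)
    also have "\<dots> \<le> norm ((X m - Y m) + (Y m - Y n)) + norm (X n - Y n)"
      by (rule norm_triangle_ineq4)
    also have "\<dots> \<le> norm (X m - Y m) + norm (Y m - Y n) + norm (X n - Y n)"
      using norm_triangle_ineq by (rule add_right_mono)
    also have "\<dots> < e"
      using M[OF \<open>M \<le> m\<close> \<open>M \<le> n\<close>] Y(2)[of m] Y(2)[of n] by linarith
    finally show "norm (X m - X n) < e" .
  qed
qed

lemma norm_derivative_sub_difference_quotient_le:
  assumes D: "bounded_linear D" and t: "0 < t"
    and rem: "norm (f (z + t *\<^sub>R h) - f z - D (t *\<^sub>R h)) \<le> C * (norm (t *\<^sub>R h))\<^sup>2"
  shows "norm (D h - (1 / t) *\<^sub>R (f (z + t *\<^sub>R h) - f z)) \<le> C * t * (norm h)\<^sup>2"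
proof -
  interpret D: bounded_linear D
    by (rule D)
  have "D h - (1 / t) *\<^sub>R (f (z + t *\<^sub>R h) - f z) = - ((1 / t) *\<^sub>R (f (z + t *\<^sub>R h) - f z - D (t *\<^sub>R h)))"
    using t by (simp add: D.scale algebra_simps)
  then have "norm (D h - (1 / t) *\<^sub>R (f (z + t *\<^sub>R h) - f z)) = (1 / t) * norm (f (z + t *\<^sub>R h) - f z - D (t *\<^sub>R h))"
    using t by simp
  also have "\<dots> \<le> (1 / t) * (C * (norm (t *\<^sub>R h))\<^sup>2)"
    using rem t by (intro mult_left_mono) auto
  also have "\<dots> = C * t * (norm h)\<^sup>2"
    using t by (simp add: power2_eq_square)
  finally show ?thesis .
qed

text \<open>The difference quotient at a small step t h approximates D_j h uniformly in j.\<close>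

lemma Cauchy_derivatives_if_uniform_remainder:
  fixes f :: "nat \<Rightarrow> 'a::real_normed_vector \<Rightarrow> 'b::real_normed_vector"
  assumes \<delta>: "0 < \<delta>" and C: "0 \<le> C"
    and lim: "\<And>h. norm h < \<delta> \<Longrightarrow> (\<lambda>j. f j (z + h)) \<longlonglongrightarrow> F (z + h)"
    and lin: "\<And>j. bounded_linear (Dj j)"
    and rem: "\<And>j h. norm h < \<delta> \<Longrightarrow> norm (f j (z + h) - f j z - Dj j h) \<le> C * (norm h)\<^sup>2"
  shows "Cauchy (\<lambda>j. Dj j h)"
proof (cases "h = 0")
  case True
  then show ?thesis
    using lin LIMSEQ_imp_Cauchy[OF tendsto_const] by (simp add: linear_simps)
next
  case False
  show ?thesis
  proof (rule Cauchy_if_uniformly_approximable)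
    fix \<eta> :: real
    assume \<eta>: "0 < \<eta>"
    obtain t where t: "0 < t" "t < \<delta> / norm h" "t < \<eta> / ((C + 1) * (norm h)\<^sup>2)"
      using field_lbound_gt_zero[of "\<delta> / norm h" "\<eta> / ((C + 1) * (norm h)\<^sup>2)"] False \<delta> \<eta> C
      by auto
    have th: "norm (t *\<^sub>R h) < \<delta>"
      using t(1,2) False by (simp add: field_simps)
    have "C * t * (norm h)\<^sup>2 \<le> (C + 1) * t * (norm h)\<^sup>2"
      using t(1) by (simp add: mult_right_mono)
    also have "\<dots> < \<eta>"
    proof -
      have "0 < (C + 1) * (norm h)\<^sup>2"
        using False C by simp
      then show ?thesis
        using t(3) by (simp add: pos_less_divide_eq mult_ac)
    qed
    finally have small: "C * t * (norm h)\<^sup>2 \<le> \<eta>"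
      by simp
    define Y where "Y j = (1 / t) *\<^sub>R (f j (z + t *\<^sub>R h) - f j z)" for j
    have "Y \<longlonglongrightarrow> (1 / t) *\<^sub>R (F (z + t *\<^sub>R h) - F z)"
      unfolding Y_def using lim[OF th] lim[of 0] \<delta> by (intro tendsto_intros) simp_all
    moreover have "norm (Dj j h - Y j) \<le> \<eta>" for j
      using norm_derivative_sub_difference_quotient_le[OF lin t(1) rem[OF th, of j]] small
      unfolding Y_def by linarith
    ultimately show "\<exists>Y. Cauchy Y \<and> (\<forall>j. norm (Dj j h - Y j) \<le> \<eta>)"
      using LIMSEQ_imp_Cauchy by blast
  qed
qed

lemma has_derivative_limit:
  fixes f :: "nat \<Rightarrow> 'a::real_normed_vector \<Rightarrow> 'b::banach"
  assumes \<delta>: "0 < \<delta>" and C: "0 \<le> C"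
    and lim: "\<And>h. norm h < \<delta> \<Longrightarrow> (\<lambda>j. f j (z + h)) \<longlonglongrightarrow> F (z + h)"
    and lin: "\<And>j. bounded_linear (Dj j)" and bd: "\<And>j h. norm (Dj j h) \<le> norm h * K"
    and rem: "\<And>j h. norm h < \<delta> \<Longrightarrow> norm (f j (z + h) - f j z - Dj j h) \<le> C * (norm h)\<^sup>2"
  obtains D where "\<And>h. (\<lambda>j. Dj j h) \<longlonglongrightarrow> D h" "(F has_derivative D) (at z)"
proof
  define D where "D h = lim (\<lambda>j. Dj j h)" for h
  show D: "(\<lambda>j. Dj j h) \<longlonglongrightarrow> D h" for h
    using Cauchy_derivatives_if_uniform_remainder[OF \<delta> C lim lin rem]
    unfolding D_def Cauchy_convergent_iff convergent_LIMSEQ_iff by blast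
  have "bounded_linear D"
  proof (rule bounded_linear_intro)
    show "D (x + y) = D x + D y" for x y
      using tendsto_add[OF D[of x] D[of y]] lin by (simp add: linear_simps LIMSEQ_unique[OF D])
    show "D (r *\<^sub>R x) = r *\<^sub>R D x" for r x
      using tendsto_scaleR[OF tendsto_const D[of x]] lin by (simp add: linear_simps LIMSEQ_unique[OF D])
    show "norm (D x) \<le> norm x * K" for x
      using bd by (intro LIMSEQ_le_const2[OF tendsto_norm[OF D]]) auto
  qed
  then show "(F has_derivative D) (at z)"
  proof (rule has_derivative_if_quadratic_remainder[OF _ \<delta> C])
    fix h :: 'a
    assume h: "norm h < \<delta>"
    have "(\<lambda>j. f j (z + h) - f j z - Dj j h) \<longlonglongrightarrow> F (z + h) - F z - D h"
      using lim[OF h] lim[of 0] \<delta> D by (intro tendsto_intros) auto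
    then show "norm (F (z + h) - F z - D h) \<le> C * (norm h)\<^sup>2"
      using rem h by (intro LIMSEQ_le_const2[OF tendsto_norm]) auto
  qed
qed

lemma banach_holomorphic_on_limit:
  fixes f :: "nat \<Rightarrow> 'x::complex_banach \<Rightarrow> 'f::complex_banach"
  assumes U: "open U" and hol: "\<And>j. banach_holomorphic_on (f j) U"
    and bd: "\<And>j x. x \<in> U \<Longrightarrow> norm (f j x) \<le> M"
    and lim: "\<And>x. x \<in> U \<Longrightarrow> (\<lambda>j. f j x) \<longlonglongrightarrow> F x"
  shows "banach_holomorphic_on F U"
  unfolding banach_holomorphic_on_def
proof
  fix z
  assume z: "z \<in> U"
  obtain R where R: "0 < R" "ball z R \<subseteq> U"
    using U z open_contains_ball by blast
  have M: "0 \<le> M"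
    using order_trans[OF norm_ge_zero bd[OF z]] by simp
  have "\<forall>j. \<exists>D. (f j has_derivative D) (at z) \<and> complex_linear D"
    using hol z unfolding banach_holomorphic_on_def by blast
  then obtain Dj where Dj: "\<And>j. (f j has_derivative Dj j) (at z)" "\<And>j. complex_linear (Dj j)"
    by metis
  have hol_R: "banach_holomorphic_on (f j) (ball z R)" for j
    by (rule banach_holomorphic_on_subset[OF hol R(2)])
  have bd_R: "\<And>x. x \<in> ball z R \<Longrightarrow> norm (f j x) \<le> M" for j
    using bd R(2) by blast
  have in_U: "z + h \<in> U" if "norm h < R / 4" for h
    using that R by (auto intro!: subsetD[OF R(2)] simp: dist_norm)
  obtain D where D: "\<And>h. (\<lambda>j. Dj j h) \<longlonglongrightarrow> D h" "(F has_derivative D) (at z)"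
  proof (rule has_derivative_limit[of "R / 4" "16 * M / R\<^sup>2" f z F Dj "4 * M / R"])
    show "(\<lambda>j. f j (z + h)) \<longlonglongrightarrow> F (z + h)" if "norm h < R / 4" for h
      using lim in_U that by blast
    show "bounded_linear (Dj j)" for j
      using Dj(1) has_derivative_bounded_linear by blast
    show "norm (Dj j h) \<le> norm h * (4 * M / R)" for j h
      using norm_derivative_le[OF hol_R R(1) bd_R Dj] by (simp add: field_simps)
    show "norm (f j (z + h) - f j z - Dj j h) \<le> 16 * M / R\<^sup>2 * (norm h)\<^sup>2" if "norm h < R / 4" for j h
      using norm_derivative_remainder_le[OF hol_R R(1) bd_R Dj, of h] that by simp
  qed (use R M in auto)
  moreover have "complex_linear D"
    unfolding complex_linear_def
  proof (intro allI)
    fix c h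
    have "(\<lambda>j. Dj j (c *\<^sub>C h)) \<longlonglongrightarrow> c *\<^sub>C D h"
      using bounded_linear.tendsto[OF bounded_linear_scaleC_right D(1)] Dj(2)
      by (simp add: complex_linear_def)
    then show "D (c *\<^sub>C h) = c *\<^sub>C D h"
      using D(1) LIMSEQ_unique by blast
  qed
  ultimately show "\<exists>D. (F has_derivative D) (at z) \<and> complex_linear D"
    by blast
qed

lemma bounded_linear_derivative_blinfun_apply:
  fixes Q :: "'a::real_normed_vector \<Rightarrow> ('e::real_normed_vector \<Rightarrow>\<^sub>L 'f::real_normed_vector)"
  assumes DG: "\<And>e. ((\<lambda>x. blinfun_apply (Q x) e) has_derivative DG e) (at z)"
    and est: "\<And>e h. norm (DG e h) \<le> C * norm e * norm h"
  shows "bounded_linear (\<lambda>e. DG e h)"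
proof (rule bounded_linear_intro[of _ "C * norm h"])
  show "DG (e1 + e2) h = DG e1 h + DG e2 h" for e1 e2
  proof -
    have "((\<lambda>x. blinfun_apply (Q x) (e1 + e2)) has_derivative (\<lambda>h. DG e1 h + DG e2 h)) (at z)"
      using has_derivative_add[OF DG[of e1] DG[of e2]] by (simp add: blinfun.add_right)
    then show ?thesis
      using has_derivative_unique[OF DG] by metis
  qed
  show "DG (t *\<^sub>R e) h = t *\<^sub>R DG e h" for t e
  proof -
    have "((\<lambda>x. blinfun_apply (Q x) (t *\<^sub>R e)) has_derivative (\<lambda>h. t *\<^sub>R DG e h)) (at z)"
      using has_derivative_scaleR_right[OF DG[of e]] by (simp add: blinfun.scaleR_right)
    then show ?thesis
      using has_derivative_unique[OF DG] by metis
  qed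
  show "norm (DG e h) \<le> norm e * (C * norm h)" for e
    using est[of e h] by (simp add: mult_ac)
qed

lemma has_derivative_blinfun_if_uniform_remainder:
  fixes Q :: "'a::real_normed_vector \<Rightarrow> ('e::real_normed_vector \<Rightarrow>\<^sub>L 'f::real_normed_vector)"
  assumes DG: "\<And>e. ((\<lambda>x. blinfun_apply (Q x) e) has_derivative DG e) (at z)"
    and \<delta>: "0 < \<delta>" and C: "0 \<le> C1" "0 \<le> C2"
    and est: "\<And>e h. norm (DG e h) \<le> C1 * norm e * norm h"
    and rem: "\<And>e h. norm h < \<delta> \<Longrightarrow> norm (Q (z + h) e - Q z e - DG e h) \<le> C2 * norm e * (norm h)\<^sup>2"
  shows "(Q has_derivative (\<lambda>h. Blinfun (\<lambda>e. DG e h))) (at z)"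
proof -
  define DQ where "DQ = (\<lambda>h. Blinfun (\<lambda>e. DG e h))"
  have DQ_apply: "blinfun_apply (DQ h) e = DG e h" for h e
    using bounded_linear_derivative_blinfun_apply[OF DG est]
    by (simp add: DQ_def bounded_linear_Blinfun_apply)
  have DG_lin: "bounded_linear (DG e)" for e
    using DG has_derivative_bounded_linear by blast
  have "bounded_linear DQ"
  proof (rule bounded_linear_intro[of _ C1])
    show "DQ (x + y) = DQ x + DQ y" for x y
      by (rule blinfun_eqI) (use DG_lin in \<open>simp add: DQ_apply blinfun.add_left linear_simps\<close>)
    show "DQ (t *\<^sub>R x) = t *\<^sub>R DQ x" for t x
      by (rule blinfun_eqI) (use DG_lin in \<open>simp add: DQ_apply blinfun.scaleR_left linear_simps\<close>)
    show "norm (DQ x) \<le> norm x * C1" for x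
      by (rule norm_blinfun_bound) (use C est in \<open>simp_all add: DQ_apply mult_ac\<close>)
  qed
  then have "(Q has_derivative DQ) (at z)"
  proof (rule has_derivative_if_quadratic_remainder[OF _ \<delta> C(2)])
    fix h :: 'a
    assume h: "norm h < \<delta>"
    show "norm (Q (z + h) - Q z - DQ h) \<le> C2 * (norm h)\<^sup>2"
      by (rule norm_blinfun_bound)
        (use C rem[OF h] in \<open>simp_all add: blinfun.diff_left DQ_apply mult_ac\<close>)
  qed
  then show ?thesis
    unfolding DQ_def .
qed

text \<open>The Cauchy estimates bound the derivatives of the applications Q x e and their
remainders uniformly in norm e, so these derivatives assemble into one for Q.\<close>

lemma banach_holomorphic_on_blinfun:
  fixes Q :: "'x::complex_banach \<Rightarrow> ('e::real_normed_vector \<Rightarrow>\<^sub>L 'f::complex_banach)"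
  assumes U: "open U" and hol: "\<And>e. banach_holomorphic_on (\<lambda>z. blinfun_apply (Q z) e) U"
    and bd: "\<And>z. z \<in> U \<Longrightarrow> norm (Q z) \<le> K"
  shows "banach_holomorphic_on Q U"
  unfolding banach_holomorphic_on_def
proof
  fix z
  assume z: "z \<in> U"
  obtain R where R: "0 < R" "ball z R \<subseteq> U"
    using U z open_contains_ball by blast
  have K: "0 \<le> K"
    using order_trans[OF norm_ge_zero bd[OF z]] by simp
  have "\<forall>e. \<exists>D. ((\<lambda>x. Q x e) has_derivative D) (at z) \<and> complex_linear D"
    using hol z unfolding banach_holomorphic_on_def by blast
  then obtain DG where DG: "\<And>e. ((\<lambda>x. Q x e) has_derivative DG e) (at z)" "\<And>e. complex_linear (DG e)"
    by metis
  have hol_R: "banach_holomorphic_on (\<lambda>x. Q x e) (ball z R)" for e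
    by (rule banach_holomorphic_on_subset[OF hol R(2)])
  have bd_R: "norm (Q x e) \<le> K * norm e" if "x \<in> ball z R" for x e
    using norm_blinfun[of "Q x" e] bd[of x] that R(2) mult_right_mono[of "norm (Q x)" K "norm e"]
    by auto
  have est: "norm (DG e h) \<le> 4 * K / R * norm e * norm h" for e h
    using norm_derivative_le[OF hol_R R(1) bd_R DG, of e h] by (simp add: field_simps)
  have "(Q has_derivative (\<lambda>h. Blinfun (\<lambda>e. DG e h))) (at z)"
  proof (rule has_derivative_blinfun_if_uniform_remainder[OF DG(1) _ _ _ est])
    show "norm (Q (z + h) e - Q z e - DG e h) \<le> 16 * K / R\<^sup>2 * norm e * (norm h)\<^sup>2"
      if "norm h < R / 4" for e h
      using norm_derivative_remainder_le[OF hol_R R(1) bd_R DG, of h e] that by (simp add: field_simps)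
  qed (use R K in simp_all)
  moreover have "complex_linear (\<lambda>h. Blinfun (\<lambda>e. DG e h))"
  proof -
    have DQ_apply: "blinfun_apply (Blinfun (\<lambda>e. DG e h)) e = DG e h" for h e
      using bounded_linear_derivative_blinfun_apply[OF DG(1) est]
      by (simp add: bounded_linear_Blinfun_apply)
    show ?thesis
      unfolding complex_linear_def
      by (intro allI blinfun_eqI, simp only: DQ_apply blinfun_apply_scaleC)
        (use DG(2) in \<open>simp add: complex_linear_def\<close>)
  qed
  ultimately show "\<exists>D. (Q has_derivative D) (at z) \<and> complex_linear D"
    by blast
qed

lemma Baire_closed_cover:
  fixes T :: "nat \<Rightarrow> 'a::banach set"
  assumes closed: "\<And>n. closed (T n)" and cover: "\<Union>(range T) = UNIV"
  obtains n x d where "0 < d" "ball x d \<subseteq> T n"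
proof (rule ccontr)
  assume no_ball: "\<not> thesis"
  have empty: "interior (T n) = {}" for n
  proof (rule ccontr)
    assume "interior (T n) \<noteq> {}"
    then obtain x where "x \<in> interior (T n)"
      by blast
    then obtain d where "0 < d" "ball x d \<subseteq> T n"
      by (meson mem_interior)
    then show False
      using no_ball that by blast
  qed
  have "euclidean interior_of \<Union>(range T) = {}"
  proof (rule Baire_category_alt)
    show "completely_metrizable_space (euclidean :: 'a topology) \<or>
        locally_compact_space (euclidean :: 'a topology) \<and> regular_space (euclidean :: 'a topology)"
      using completely_metrizable_space_euclidean by blast
    show "closedin euclidean S \<and> euclidean interior_of S = {}" if "S \<in> range T" for S
    proof -
      from that obtain n where "S = T n"
        by blast
      then show ?thesis
        using closed[of n] empty[of n] closed_closedin by simp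
    qed
  qed simp
  then show False
    using cover by simp
qed

section \<open>Continuation across a boundary point\<close>

lemma ball_between_centre_and_boundary:
  fixes c \<xi> :: "'a::real_normed_vector"
  assumes \<xi>: "dist c \<xi> = r" and \<rho>: "0 < \<rho>" "\<rho> \<le> r"
  obtains b where "ball b (\<rho>/6) \<subseteq> ball c r" "ball b (5 * \<rho>/6) \<subseteq> ball \<xi> \<rho>"
    "ball \<xi> (\<rho>/3) \<subseteq> ball b (\<rho>/2)"
proof
  define b where "b = \<xi> - (\<rho> / (6 * r)) *\<^sub>R (\<xi> - c)"
  have r: "0 < r"
    using \<rho> by simp
  have "dist b \<xi> = \<rho> / (6 * r) * r"
    using \<xi> \<rho> r by (simp add: b_def dist_norm norm_minus_commute)
  then have b_\<xi>: "dist b \<xi> = \<rho>/6"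
    using r by simp
  have "b - c = (1 - \<rho> / (6 * r)) *\<^sub>R (\<xi> - c)"
    by (simp add: b_def algebra_simps)
  moreover have "0 \<le> 1 - \<rho> / (6 * r)"
    using \<rho> r by (simp add: field_simps)
  ultimately have "dist b c = (1 - \<rho> / (6 * r)) * r"
    using \<xi> by (simp add: dist_norm norm_minus_commute)
  then have b_c: "dist b c = r - \<rho>/6"
    using r by (simp add: algebra_simps)
  show "ball b (\<rho>/6) \<subseteq> ball c r"
  proof
    fix x
    assume "x \<in> ball b (\<rho>/6)"
    then show "x \<in> ball c r"
      using dist_triangle[of c x b] b_c by (simp add: dist_commute)
  qed
  show "ball b (5 * \<rho>/6) \<subseteq> ball \<xi> \<rho>"
  proof
    fix x
    assume "x \<in> ball b (5 * \<rho>/6)"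
    then show "x \<in> ball \<xi> \<rho>"
      using dist_triangle[of \<xi> x b] b_\<xi> by (simp add: dist_commute)
  qed
  show "ball \<xi> (\<rho>/3) \<subseteq> ball b (\<rho>/2)"
  proof
    fix x
    assume "x \<in> ball \<xi> (\<rho>/3)"
    then show "x \<in> ball b (\<rho>/2)"
      using dist_triangle[of b x \<xi>] b_\<xi> by (simp add: dist_commute)
  qed
qed

text \<open>Every point of ball \<xi> (\<rho>/3) lies on a complex line through b whose disc of
radius 5/3 stays in the domain and whose disc of radius 1/3 lies in ball c r.\<close>

lemma banach_holomorphic_continuation_unique:
  fixes g1 g2 :: "'x::complex_banach \<Rightarrow> 'f::complex_banach"
  assumes \<xi>: "dist c \<xi> = r" and \<rho>: "0 < \<rho>" "\<rho> \<le> r"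
    and g: "banach_holomorphic_on g1 (ball c r \<union> ball \<xi> \<rho>)" "banach_holomorphic_on g2 (ball c r \<union> ball \<xi> \<rho>)"
    and eq: "\<And>z. z \<in> ball c r \<Longrightarrow> g1 z = g2 z"
    and z: "z \<in> ball \<xi> (\<rho>/3)"
  shows "g1 z = g2 z"
proof -
  obtain b where b: "ball b (\<rho>/6) \<subseteq> ball c r" "ball b (5 * \<rho>/6) \<subseteq> ball \<xi> \<rho>"
    "ball \<xi> (\<rho>/3) \<subseteq> ball b (\<rho>/2)"
    using ball_between_centre_and_boundary[OF \<xi> \<rho>] .
  define w where "w = z - b"
  have w: "norm w < \<rho>/2"
    using b(3) z by (auto simp: w_def dist_norm norm_minus_commute)
  have "5/3 * norm w \<le> 5 * \<rho>/6" "1/3 * norm w \<le> \<rho>/6" "0 < 5 * \<rho>/6" "0 < \<rho>/6"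
    using w \<rho> by auto
  note on_line = add_scaleC_in_ball[OF _ this(1,3)] add_scaleC_in_ball[OF _ this(2,4)]
  have "(\<lambda>x. g1 x - g2 x) (b + w) = 0"
  proof (rule banach_holomorphic_vanishes_on_line[OF banach_holomorphic_on_diff[OF g], of "5/3" "1/3"])
    show "b + u *\<^sub>C w \<in> ball c r \<union> ball \<xi> \<rho>" if "u \<in> ball 0 (5/3)" for u
      using on_line(1)[OF that] b(2) by blast
    show "g1 (b + u *\<^sub>C w) - g2 (b + u *\<^sub>C w) = 0" if "u \<in> ball 0 (1/3)" for u
      using subsetD[OF b(1) on_line(2)[OF that]] eq by simp
  qed simp_all
  then show ?thesis
    by (simp add: w_def)
qed

definition bounded_continuation ::
    "('x::complex_banach \<Rightarrow> ('e::complex_banach \<Rightarrow>\<^sub>L 'f::complex_banach)) \<Rightarrow> 'x \<Rightarrow> real \<Rightarrow> 'x \<Rightarrow>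
      'e \<Rightarrow> real \<Rightarrow> real \<Rightarrow> ('x \<Rightarrow> 'f) \<Rightarrow> bool" where
  "bounded_continuation P c r \<xi> e \<rho> M g \<longleftrightarrow>
     banach_holomorphic_on g (ball c r \<union> ball \<xi> \<rho>) \<and>
     (\<forall>z\<in>ball c r. g z = blinfun_apply (P z) e) \<and> (\<forall>z\<in>ball \<xi> \<rho>. norm (g z) \<le> M)"

lemma bounded_continuation_of_continuation:
  assumes r: "0 < r"
    and cont: "open W" "\<xi> \<in> W" "banach_holomorphic_on g (ball c r \<union> W)"
      "\<And>z. z \<in> ball c r \<Longrightarrow> g z = blinfun_apply (P z) e"
  shows "\<exists>n::nat. bounded_continuation P c r \<xi> e (r / (real n + 1)) (real n + 1) g"
proof -
  obtain d1 where d1: "0 < d1" "\<And>x. x \<in> ball \<xi> d1 \<Longrightarrow> norm (g x) \<le> norm (g \<xi>) + 1"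
    using isCont_norm_le_on_ball[OF banach_holomorphic_on_imp_isCont[OF cont(3)]] cont(2) by blast
  obtain d2 where d2: "d2 > 0" "ball \<xi> d2 \<subseteq> W"
    using cont(1,2) open_contains_ball by blast
  define m where "m = min d1 d2"
  have m: "0 < m" "m \<le> d1" "m \<le> d2"
    using d1 d2 by (auto simp: m_def)
  obtain n :: nat where n: "max (r / m) (norm (g \<xi>)) < real n"
    using reals_Archimedean2 by blast
  define \<rho> where "\<rho> = r / (real n + 1)"
  have "r < real n * m"
    using n m by (simp add: divide_less_eq mult.commute)
  then have "\<rho> < m"
    unfolding \<rho>_def using m by (simp add: divide_less_eq algebra_simps)
  then have \<rho>: "\<rho> \<le> d1" "\<rho> \<le> d2"
    using m by auto
  have "bounded_continuation P c r \<xi> e \<rho> (real n + 1) g"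
    unfolding bounded_continuation_def
  proof (intro conjI ballI)
    have "ball c r \<union> ball \<xi> \<rho> \<subseteq> ball c r \<union> W"
      using subset_ball[OF \<rho>(2)] d2(2) by blast
    then show "banach_holomorphic_on g (ball c r \<union> ball \<xi> \<rho>)"
      by (rule banach_holomorphic_on_subset[OF cont(3)])
    fix z
    assume "z \<in> ball \<xi> \<rho>"
    then show "norm (g z) \<le> real n + 1"
      using d1(2)[of z] subset_ball[OF \<rho>(1)] n by force
  qed (use cont(4) in simp)
  then show ?thesis
    unfolding \<rho>_def by blast
qed

text \<open>Near the point b inside ball c r the continuations are P z e_j and hence uniformly
Cauchy; Vitali propagation carries this to ball \<xi> (\<rho>/3).\<close>

lemma bounded_continuations_convergent:
  fixes P :: "'x::complex_banach \<Rightarrow> ('e::complex_banach \<Rightarrow>\<^sub>L 'f::complex_banach)"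
  assumes \<xi>: "dist c \<xi> = r" and \<rho>: "0 < \<rho>" "\<rho> \<le> r"
    and holo: "banach_holomorphic_on P (ball c r)"
    and gs: "\<And>j. bounded_continuation P c r \<xi> (es j) \<rho> M (gs j)" and es: "convergent es"
    and z: "z \<in> ball \<xi> (\<rho>/3)"
  shows "convergent (\<lambda>j. gs j z)"
proof -
  obtain b where b: "ball b (\<rho>/6) \<subseteq> ball c r" "ball b (5 * \<rho>/6) \<subseteq> ball \<xi> \<rho>"
    "ball \<xi> (\<rho>/3) \<subseteq> ball b (\<rho>/2)"
    using ball_between_centre_and_boundary[OF \<xi> \<rho>] .
  have "b \<in> ball c r"
    using \<rho> by (intro subsetD[OF b(1)]) simp
  then obtain d0 where d0: "0 < d0" "\<And>x. x \<in> ball b d0 \<Longrightarrow> norm (P x) \<le> norm (P b) + 1"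
    using isCont_norm_le_on_ball[OF banach_holomorphic_on_imp_isCont[OF holo]] by blast
  define d where "d = min d0 (\<rho>/6)"
  have d: "0 < d" "ball b d \<subseteq> ball c r" "ball b d \<subseteq> ball b d0"
  proof -
    show "0 < d"
      using d0(1) \<rho> by (simp add: d_def)
    show "ball b d \<subseteq> ball b d0" "ball b d \<subseteq> ball c r"
      using subset_ball[of d d0 b] subset_ball[of d "\<rho>/6" b] b(1) by (auto simp: d_def)
  qed
  have "uniformly_Cauchy_on (ball b d) (\<lambda>j x. blinfun_apply (P x) (es j))"
  proof (rule uniformly_Cauchy_on_blinfun_apply[OF convergent_Cauchy[OF es]])
    show "norm (P x) \<le> norm (P b) + 1" if "x \<in> ball b d" for x
      using d0(2) d(3) that by blast
  qed
  moreover have "gs j x = blinfun_apply (P x) (es j)" if "x \<in> ball b d" for j x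
    using gs[of j] d(2) that unfolding bounded_continuation_def by blast
  ultimately have unif: "uniformly_Cauchy_on (ball b d) gs"
    unfolding uniformly_Cauchy_on_def by simp
  have "Cauchy (\<lambda>j. gs j (b + (z - b)))"
  proof (rule Cauchy_if_uniformly_Cauchy_near_centre[OF _ _ d(1) unif, where R = "5 * \<rho>/6" and A = M])
    show "banach_holomorphic_on (gs j) (ball b (5 * \<rho>/6))" for j
      using gs[of j] b(2) banach_holomorphic_on_subset unfolding bounded_continuation_def by blast
    show "norm (gs j x) \<le> M" if "x \<in> ball b (5 * \<rho>/6)" for j x
      using gs[of j] that b(2) unfolding bounded_continuation_def by blast
    show "norm (z - b) < 3 * (5 * \<rho>/6) / 5"
      using z b(3) by (auto simp: dist_norm norm_minus_commute)
  qed
  then show ?thesis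
    by (simp add: Cauchy_convergent_iff)
qed

lemma bounded_continuation_glue:
  assumes holo: "banach_holomorphic_on P (ball c r)"
    and G: "banach_holomorphic_on G (ball \<xi> \<rho>)" "\<And>z. z \<in> ball \<xi> \<rho> \<Longrightarrow> norm (G z) \<le> M"
    and eq: "\<And>z. z \<in> ball c r \<Longrightarrow> z \<in> ball \<xi> \<rho> \<Longrightarrow> G z = blinfun_apply (P z) e"
  shows "bounded_continuation P c r \<xi> e \<rho> M (\<lambda>z. if z \<in> ball c r then blinfun_apply (P z) e else G z)"
  unfolding bounded_continuation_def
proof (intro conjI ballI)
  show "banach_holomorphic_on (\<lambda>z. if z \<in> ball c r then blinfun_apply (P z) e else G z) (ball c r \<union> ball \<xi> \<rho>)"
  proof (rule banach_holomorphic_on_Un)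
    show "banach_holomorphic_on (\<lambda>z. if z \<in> ball c r then blinfun_apply (P z) e else G z) (ball c r)"
      by (rule banach_holomorphic_on_cong[OF open_ball banach_holomorphic_on_blinfun_apply[OF holo]]) simp
    show "banach_holomorphic_on (\<lambda>z. if z \<in> ball c r then blinfun_apply (P z) e else G z) (ball \<xi> \<rho>)"
      by (rule banach_holomorphic_on_cong[OF open_ball G(1)]) (simp add: eq)
  qed
  show "norm (if z \<in> ball c r then blinfun_apply (P z) e else G z) \<le> M" if "z \<in> ball \<xi> \<rho>" for z
    using G(2)[OF that] eq[OF _ that] by (cases "z \<in> ball c r") auto
qed simp

lemma bounded_continuation_closure:
  fixes P :: "'x::complex_banach \<Rightarrow> ('e::complex_banach \<Rightarrow>\<^sub>L 'f::complex_banach)"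
  assumes \<xi>: "dist c \<xi> = r" and \<rho>: "0 < \<rho>" "\<rho> \<le> r"
    and holo: "banach_holomorphic_on P (ball c r)"
    and e: "e \<in> closure {e. \<exists>g. bounded_continuation P c r \<xi> e \<rho> M g}"
  shows "\<exists>g. bounded_continuation P c r \<xi> e (\<rho>/3) M g"
proof -
  obtain es where "\<And>j. es j \<in> {e. \<exists>g. bounded_continuation P c r \<xi> e \<rho> M g}" and es: "es \<longlonglongrightarrow> e"
    using e closure_sequential by blast
  then have "\<forall>j. \<exists>g. bounded_continuation P c r \<xi> (es j) \<rho> M g"
    by blast
  then obtain gs where gs: "\<And>j. bounded_continuation P c r \<xi> (es j) \<rho> M (gs j)"
    by metis
  have sub: "ball \<xi> (\<rho>/3) \<subseteq> ball \<xi> \<rho>"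
    using \<rho> by (simp add: subset_ball)
  have "\<forall>z\<in>ball \<xi> (\<rho>/3). \<exists>l. (\<lambda>j. gs j z) \<longlonglongrightarrow> l"
    using bounded_continuations_convergent[OF \<xi> \<rho> holo gs convergentI[OF es]]
    by (simp add: convergent_def)
  then obtain G where G: "\<And>z. z \<in> ball \<xi> (\<rho>/3) \<Longrightarrow> (\<lambda>j. gs j z) \<longlonglongrightarrow> G z"
    by metis
  have gs_hol: "banach_holomorphic_on (gs j) (ball \<xi> (\<rho>/3))"
    and gs_P: "\<And>z. z \<in> ball c r \<Longrightarrow> gs j z = blinfun_apply (P z) (es j)"
    and gs_bd: "\<And>z. z \<in> ball \<xi> (\<rho>/3) \<Longrightarrow> norm (gs j z) \<le> M" for j
    using gs[of j] sub banach_holomorphic_on_subset unfolding bounded_continuation_def by blast+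
  have "bounded_continuation P c r \<xi> e (\<rho>/3) M
      (\<lambda>z. if z \<in> ball c r then blinfun_apply (P z) e else G z)"
  proof (rule bounded_continuation_glue[OF holo])
    show "banach_holomorphic_on G (ball \<xi> (\<rho>/3))"
      by (rule banach_holomorphic_on_limit[OF _ gs_hol gs_bd G]) simp_all
    show "norm (G z) \<le> M" if "z \<in> ball \<xi> (\<rho>/3)" for z
      using gs_bd that by (intro LIMSEQ_le_const2[OF tendsto_norm[OF G]]) auto
    show "G z = blinfun_apply (P z) e" if "z \<in> ball c r" "z \<in> ball \<xi> (\<rho>/3)" for z
    proof (rule LIMSEQ_unique[OF G[OF that(2)]])
      show "(\<lambda>j. gs j z) \<longlonglongrightarrow> blinfun_apply (P z) e"
        using bounded_linear.tendsto[OF blinfun.bounded_linear_right es] gs_P[OF that(1)] by simp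
    qed
  qed
  then show ?thesis
    by blast
qed

lemma bounded_continuation_from_ball:
  assumes d: "0 < d"
    and ex: "\<And>e'. e' \<in> ball e0 d \<Longrightarrow> \<exists>g. bounded_continuation P c r \<xi> e' \<rho> M g"
  shows "\<exists>g. bounded_continuation P c r \<xi> e \<rho> (4 * M / d * norm e) g"
proof (cases "e = 0")
  case True
  then have "bounded_continuation P c r \<xi> e \<rho> (4 * M / d * norm e) (\<lambda>z. 0)"
    by (simp add: bounded_continuation_def banach_holomorphic_on_zero blinfun.zero_right)
  then show ?thesis
    by blast
next
  case False
  define t where "t = d / (2 * norm e)"
  have t: "0 < t"
    using d False by (simp add: t_def)
  have "e0 + t *\<^sub>R e \<in> ball e0 d"
    using t d False by (simp add: dist_norm t_def)
  then obtain g1 where g1: "bounded_continuation P c r \<xi> (e0 + t *\<^sub>R e) \<rho> M g1"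
    using ex by blast
  obtain g0 where g0: "bounded_continuation P c r \<xi> e0 \<rho> M g0"
    using ex d by (meson centre_in_ball)
  define g where "g z = (1 / t) *\<^sub>R (g1 z - g0 z)" for z
  have "bounded_continuation P c r \<xi> e \<rho> (4 * M / d * norm e) g"
    unfolding bounded_continuation_def
  proof (intro conjI ballI)
    show "banach_holomorphic_on g (ball c r \<union> ball \<xi> \<rho>)"
      unfolding g_def using g1 g0
      by (intro banach_holomorphic_on_scaleR banach_holomorphic_on_diff)
        (auto simp: bounded_continuation_def)
    show "g z = blinfun_apply (P z) e" if "z \<in> ball c r" for z
      using g1 g0 that t
      by (simp add: bounded_continuation_def g_def blinfun.add_right blinfun.scaleR_right)
    fix z
    assume z: "z \<in> ball \<xi> \<rho>"
    have "norm (g1 z) \<le> M" "norm (g0 z) \<le> M"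
      using g1 g0 z by (auto simp: bounded_continuation_def)
    then have "norm (g1 z - g0 z) \<le> M + M"
      using norm_triangle_ineq4[of "g1 z" "g0 z"] by linarith
    then have "norm (g z) \<le> (1 / t) * (2 * M)"
      using t by (simp add: g_def divide_right_mono)
    also have "\<dots> = 4 * M / d * norm e"
      using d False by (simp add: t_def field_simps)
    finally show "norm (g z) \<le> 4 * M / d * norm e" .
  qed
  then show ?thesis
    by blast
qed

text \<open>Near \<xi>, continuations depending boundedly on e are linear in e, because sums and
multiples of continuations are continuations, and continuations are unique there.\<close>

lemma bounded_continuations_linear:
  fixes P :: "'x::complex_banach \<Rightarrow> ('e::complex_banach \<Rightarrow>\<^sub>L 'f::complex_banach)"
  assumes \<xi>: "dist c \<xi> = r" and \<rho>: "0 < \<rho>" "\<rho> \<le> r"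
    and hom: "\<forall>z\<in>ball c r. is_hom (P z)"
    and G: "\<And>e. bounded_continuation P c r \<xi> e \<rho> (K * norm e) (G e)"
    and z: "z \<in> ball \<xi> (\<rho>/3)"
  shows "bounded_linear (\<lambda>e. G e z)" and "G (a *\<^sub>C e) z = a *\<^sub>C G e z"
proof -
  have G_hol: "banach_holomorphic_on (G e) (ball c r \<union> ball \<xi> \<rho>)"
    and G_P: "\<And>z. z \<in> ball c r \<Longrightarrow> G e z = blinfun_apply (P z) e"
    and G_bd: "\<And>z. z \<in> ball \<xi> \<rho> \<Longrightarrow> norm (G e z) \<le> K * norm e" for e
    using G[of e] unfolding bounded_continuation_def by blast+
  note unique = banach_holomorphic_continuation_unique[OF \<xi> \<rho> _ _ _ z]
  have "G (e1 + e2) z = G e1 z + G e2 z" for e1 e2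
    by (rule unique[OF G_hol banach_holomorphic_on_add[OF G_hol G_hol]])
      (simp add: G_P blinfun.add_right)
  moreover have "G (t *\<^sub>R e) z = t *\<^sub>R G e z" for t e
    by (rule unique[OF G_hol banach_holomorphic_on_scaleR[OF G_hol]])
      (simp add: G_P blinfun.scaleR_right)
  moreover have "norm (G e z) \<le> norm e * K" for e
    using G_bd[of z e] z \<rho> by (simp add: mult.commute)
  ultimately show "bounded_linear (\<lambda>e. G e z)"
    by (intro bounded_linear_intro[of _ K])
  show "G (a *\<^sub>C e) z = a *\<^sub>C G e z"
    by (rule unique[OF G_hol banach_holomorphic_on_scaleC[OF G_hol]])
      (use hom in \<open>simp add: G_P is_hom_def complex_linear_def\<close>)
qed

lemma operator_continuation:
  fixes P :: "'x::complex_banach \<Rightarrow> ('e::complex_banach \<Rightarrow>\<^sub>L 'f::complex_banach)"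
  assumes \<xi>: "dist c \<xi> = r" and \<rho>: "0 < \<rho>" "\<rho> \<le> r"
    and hom: "\<forall>z\<in>ball c r. is_hom (P z)"
    and holo: "banach_holomorphic_on P (ball c r)"
    and K: "0 \<le> K" and ex: "\<And>e. \<exists>g. bounded_continuation P c r \<xi> e \<rho> (K * norm e) g"
  obtains Q where "banach_holomorphic_on Q (ball c r \<union> ball \<xi> (\<rho>/3))"
    "\<forall>z\<in>ball c r \<union> ball \<xi> (\<rho>/3). is_hom (Q z)" "\<forall>z\<in>ball c r. Q z = P z"
proof
  define W where "W = ball \<xi> (\<rho>/3)"
  have W: "open W" "W \<subseteq> ball \<xi> \<rho>"
    using \<rho> by (auto simp: W_def subset_ball)
  define G where "G e = (SOME g. bounded_continuation P c r \<xi> e \<rho> (K * norm e) g)" for e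
  have G: "bounded_continuation P c r \<xi> e \<rho> (K * norm e) (G e)" for e
    unfolding G_def by (rule someI_ex[OF ex])
  note G_linear = bounded_continuations_linear[OF \<xi> \<rho> hom G, folded W_def]
  define Q where "Q z = (if z \<in> ball c r then P z else Blinfun (\<lambda>e. G e z))" for z
  have Q_W: "blinfun_apply (Q z) e = G e z" if "z \<in> W" for z e
    using that G[of e] unfolding bounded_continuation_def
    by (simp add: Q_def bounded_linear_Blinfun_apply[OF G_linear(1)])
  have "banach_holomorphic_on Q W"
  proof (rule banach_holomorphic_on_blinfun[OF W(1)])
    show "banach_holomorphic_on (\<lambda>z. blinfun_apply (Q z) e) W" for e
    proof (rule banach_holomorphic_on_cong[OF W(1)])
      show "banach_holomorphic_on (G e) W"
        using G[of e] W(2) banach_holomorphic_on_subset unfolding bounded_continuation_def by blast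
    qed (simp add: Q_W)
    show "norm (Q z) \<le> K" if "z \<in> W" for z
    proof (rule norm_blinfun_bound[OF K])
      show "norm (blinfun_apply (Q z) e) \<le> K * norm e" for e
        using G[of e] that W(2) unfolding bounded_continuation_def by (auto simp: Q_W)
    qed
  qed
  moreover have "banach_holomorphic_on Q (ball c r)"
    by (rule banach_holomorphic_on_cong[OF open_ball holo]) (simp add: Q_def)
  ultimately show "banach_holomorphic_on Q (ball c r \<union> ball \<xi> (\<rho>/3))"
    unfolding W_def by (intro banach_holomorphic_on_Un)
  have "is_hom (Q z)" if "z \<in> ball c r \<union> W" for z
  proof (cases "z \<in> ball c r")
    case False
    with that have "z \<in> W"
      by simp
    then show ?thesis
      by (simp add: is_hom_def complex_linear_def Q_W G_linear(2))
  qed (use hom in \<open>simp add: Q_def\<close>)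
  then show "\<forall>z\<in>ball c r \<union> ball \<xi> (\<rho>/3). is_hom (Q z)"
    by (simp add: W_def)
  show "\<forall>z\<in>ball c r. Q z = P z"
    by (simp add: Q_def)
qed

lemma uniformly_bounded_continuations:
  fixes P :: "'x::complex_banach \<Rightarrow> ('e::complex_banach \<Rightarrow>\<^sub>L 'f::complex_banach)"
  assumes r: "0 < r" and \<xi>: "dist c \<xi> = r"
    and holo: "banach_holomorphic_on P (ball c r)"
    and cont: "\<forall>e. \<exists>W g. open W \<and> \<xi> \<in> W \<and> banach_holomorphic_on g (ball c r \<union> W) \<and>
                   (\<forall>z\<in>ball c r. g z = blinfun_apply (P z) e)"
  obtains \<rho> K where "0 < \<rho>" "\<rho> \<le> r" "0 \<le> K"
    "\<And>e. \<exists>g. bounded_continuation P c r \<xi> e \<rho> (K * norm e) g"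
proof -
  define S where "S n = {e. \<exists>g. bounded_continuation P c r \<xi> e (r / (real n + 1)) (real n + 1) g}" for n
  have "e \<in> (\<Union>n. closure (S n))" for e
  proof -
    obtain W g where "open W" "\<xi> \<in> W" "banach_holomorphic_on g (ball c r \<union> W)"
      "\<forall>z\<in>ball c r. g z = blinfun_apply (P z) e"
      using cont by blast
    then obtain n where "e \<in> S n"
      using bounded_continuation_of_continuation[OF r] unfolding S_def by blast
    then show ?thesis
      using closure_subset by blast
  qed
  then have "(\<Union>n. closure (S n)) = UNIV"
    by blast
  then obtain n e0 \<delta> where \<delta>: "0 < \<delta>" "ball e0 \<delta> \<subseteq> closure (S n)"
    by (rule Baire_closed_cover[of "\<lambda>n. closure (S n)", OF closed_closure])
  define \<rho> where "\<rho> = r / (real n + 1)"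
  have \<rho>: "0 < \<rho>" "\<rho> \<le> r"
    using r by (auto simp: \<rho>_def field_simps)
  have "\<exists>g. bounded_continuation P c r \<xi> e (\<rho>/3) (real n + 1) g" if "e \<in> ball e0 \<delta>" for e
  proof (rule bounded_continuation_closure[OF \<xi> \<rho> holo])
    show "e \<in> closure {e. \<exists>g. bounded_continuation P c r \<xi> e \<rho> (real n + 1) g}"
      using \<delta>(2) that unfolding S_def \<rho>_def by blast
  qed
  then have "\<exists>g. bounded_continuation P c r \<xi> e (\<rho>/3) (4 * (real n + 1) / \<delta> * norm e) g" for e
    by (rule bounded_continuation_from_ball[OF \<delta>(1)])
  moreover have "0 < \<rho>/3" "\<rho>/3 \<le> r" "0 \<le> 4 * (real n + 1) / \<delta>"
    using \<rho> \<delta>(1) by auto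
  ultimately show ?thesis
    using that by blast
qed

theorem lemma6p1:
  fixes P :: "'x::complex_banach \<Rightarrow> ('e::complex_banach \<Rightarrow>\<^sub>L 'f::complex_banach)"
    and c \<xi> :: 'x and r :: real
  assumes r: "r > 0"
    and xi: "\<xi> \<in> frontier (ball c r)"
    and hom: "\<forall>z\<in>ball c r. is_hom (P z)"
    and holo: "banach_holomorphic_on P (ball c r)"
    and cont: "\<forall>e. \<exists>W g. open W \<and> \<xi> \<in> W \<and>
                   banach_holomorphic_on g (ball c r \<union> W) \<and>
                   (\<forall>z\<in>ball c r. g z = blinfun_apply (P z) e)"
  shows "\<exists>W Q. open W \<and> \<xi> \<in> W \<and>
           banach_holomorphic_on Q (ball c r \<union> W) \<and>
           (\<forall>z\<in>ball c r \<union> W. is_hom (Q z)) \<and>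
           (\<forall>z\<in>ball c r. Q z = P z)"
proof -
  have \<xi>: "dist c \<xi> = r"
    using xi r by simp
  obtain \<rho> K where \<rho>: "0 < \<rho>" "\<rho> \<le> r" and K: "0 \<le> K"
    and ex: "\<And>e. \<exists>g. bounded_continuation P c r \<xi> e \<rho> (K * norm e) g"
    using uniformly_bounded_continuations[OF r \<xi> holo cont] by blast
  obtain Q where "banach_holomorphic_on Q (ball c r \<union> ball \<xi> (\<rho>/3))"
      "\<forall>z\<in>ball c r \<union> ball \<xi> (\<rho>/3). is_hom (Q z)" "\<forall>z\<in>ball c r. Q z = P z"
    using operator_continuation[OF \<xi> \<rho> hom holo K ex] by blast
  moreover have "open (ball \<xi> (\<rho>/3))" "\<xi> \<in> ball \<xi> (\<rho>/3)"
    using \<rho> by auto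
  ultimately show ?thesis
    by blast
qed

end
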